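(* Let $\Theta$ be an $N$-tuple of pairwise commuting symmetric positive definite $n\times n$ matrices. If $Y$ is $\Theta$-self-similar, then $\mathcal{M}_\Theta Y\in\mathcal{G}_{\Theta,0}$. If $G\in\mathcal{G}_\Theta$, then $\mathcal{M}^{-1}_\Theta G$ is $\Theta$-self-similar. Moreover $(\mathcal{M}^{-1}_\Theta\circ\mathcal{M}_\Theta)(Y)=Y$ for every $\Theta$-self-similar $Y$ and $(\mathcal{M}_\Theta\circ\mathcal{M}^{-1}_\Theta)(G)=G$ for every $G\in\mathcal{G}_{\Theta,0}$.
   Context: For $t\in\mathbb{Z}^N$ and an $N$-tuple $\Theta$ of $n\times n$ matrices, $t\ast\Theta=\sum_{j=1}^N t_j\Theta_j$. For a field $Z=(Z_t)_{t\in\mathbb{Z}^N}$, $\Delta_t Z=\sum_{i\in\{0,1\}^N}(-1)^{i_1+\dots+i_N}Z_{t_1-i_1,\dots,t_N-i_N}$; for a field $Y=(Y_{e^t})_{t\in\mathbb{Z}^N}$, $\Delta_tY=\sum_{i\in\{0,1\}^N}(-1)^{i_1+\dots+i_N}Y_{e^{t-i}}$. Equality in law of fields means equality of all finite-dimensional distributions. $Y$ is $\Theta$-self-similar if $(Y_{e^{t+s}})_{t}$ and $(e^{s\ast\Theta}Y_{e^t})_{t}$ are equal in law for every $s\in\mathbb{Z}^N$. $G$ is a stationary increment field if $(\Delta_{t+s}G)_{t}$ and $(\Delta_tG)_{t}$ are equal in law for every $s$. $\mathcal{G}_\Theta$ is the class of stationary increment fields $G$ such that $\sum_{j=-\infty}^te^{j\ast\Theta}\Delta_jG:=\lim_{M_1\to\infty}\cdots\lim_{M_N\to\infty}\sum_{j_1=-M_1}^{t_1}\cdots\sum_{j_N=-M_N}^{t_N}e^{j\ast\Theta}\Delta_jG$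 converges in probability for every $t\in\mathbb{Z}^N$; $\mathcal{G}_{\Theta,0}$ is the subclass with $G_t=0$ a.s. whenever $t_l=0$ for some $l$. The transformations are: $(\mathcal{M}^{-1}_\Theta G)_{e^t}=\sum_{j=-\infty}^te^{j\ast\Theta}\Delta_jG$, and $(\mathcal{M}_\Theta Y)_t=(-1)^{|\{l:t_l<0\}|}\sum_j e^{-j\ast\Theta}\Delta_jY$, where the sum runs over $j\in\mathbb{Z}^N$ with $1\le j_l\le t_l$ if $t_l\ge0$ and $t_l+1\le j_l\le0$ if $t_l<0$ (empty ranges give empty sums). *)

theory Defs
  imports "HOL-Analysis.Analysis" "HOL-Probability.Probability"
begin

primrec matpow :: "real^'n^'n \<Rightarrow> nat \<Rightarrow> real^'n^'n" where
  "matpow A 0 = mat 1"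
| "matpow A (Suc k) = A ** matpow A k"

definition mat_exp :: "real^'n^'n \<Rightarrow> real^'n^'n" where
  "mat_exp A = (\<Sum>k. (1 / fact k) *\<^sub>R matpow A k)"

definition pos_def_mat :: "real^'n^'n \<Rightarrow> bool" where
  "pos_def_mat A \<longleftrightarrow> (\<forall>x. x \<noteq> 0 \<longrightarrow> 0 < x \<bullet> (A *v x))"

definition tstar :: "(int, 'N::finite) vec \<Rightarrow> ('N \<Rightarrow> real^'n^'n) \<Rightarrow> real^'n^'n" where
  "tstar t \<Theta> = (\<Sum>l\<in>UNIV. of_int (t $ l) *\<^sub>R \<Theta> l)"

text \<open>A field is a family of R^n-valued random vectors indexed by (int, 'N) vec.
  A field (Y_{e^t})_t is represented by the function t \<mapsto> Y_{e^t}.\<close>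

definition random_field :: "'w measure \<Rightarrow> ((int, 'N) vec \<Rightarrow> 'w \<Rightarrow> real^'n) \<Rightarrow> bool" where
  "random_field M X \<longleftrightarrow> (\<forall>t. X t \<in> borel_measurable M)"

definition eq_law :: "'w measure \<Rightarrow> ('i \<Rightarrow> 'w \<Rightarrow> 'b::topological_space)
    \<Rightarrow> ('i \<Rightarrow> 'w \<Rightarrow> 'b) \<Rightarrow> bool" where
  "eq_law M X X' \<longleftrightarrow> (\<forall>T. finite T \<longrightarrow>
      distr M (PiM T (\<lambda>_. borel)) (\<lambda>\<omega>. restrict (\<lambda>t. X t \<omega>) T)
    = distr M (PiM T (\<lambda>_. borel)) (\<lambda>\<omega>. restrict (\<lambda>t. X' t \<omega>) T))"

definition ind_vec :: "'N::finite set \<Rightarrow> (int, 'N) vec" where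
  "ind_vec S = (\<chi> l. if l \<in> S then 1 else 0)"

definition delta :: "((int, 'N::finite) vec \<Rightarrow> 'w \<Rightarrow> real^'n) \<Rightarrow> (int, 'N) vec \<Rightarrow> 'w \<Rightarrow> real^'n" where
  "delta Z t \<omega> = (\<Sum>S\<in>Pow (UNIV::'N set). (-1) ^ card S *\<^sub>R Z (t - ind_vec S) \<omega>)"

definition self_similar :: "'w measure \<Rightarrow> ('N::finite \<Rightarrow> real^'n^'n)
    \<Rightarrow> ((int, 'N) vec \<Rightarrow> 'w \<Rightarrow> real^'n) \<Rightarrow> bool" where
  "self_similar M \<Theta> Y \<longleftrightarrow> random_field M Y \<and>
     (\<forall>s. eq_law M (\<lambda>t. Y (t + s)) (\<lambda>t \<omega>. mat_exp (tstar s \<Theta>) *v Y t \<omega>))"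

definition stationary_increments :: "'w measure \<Rightarrow> ((int, 'N::finite) vec \<Rightarrow> 'w \<Rightarrow> real^'n) \<Rightarrow> bool" where
  "stationary_increments M G \<longleftrightarrow> random_field M G \<and>
     (\<forall>s. eq_law M (\<lambda>t. delta G (t + s)) (\<lambda>t. delta G t))"

definition conv_prob :: "'w measure \<Rightarrow> (nat \<Rightarrow> 'w \<Rightarrow> real^'n) \<Rightarrow> ('w \<Rightarrow> real^'n) \<Rightarrow> bool" where
  "conv_prob M Xs X \<longleftrightarrow> X \<in> borel_measurable M \<and> (\<forall>m. Xs m \<in> borel_measurable M) \<and>
     (\<forall>e>0. (\<lambda>m. measure M {\<omega>\<in>space M. e < dist (Xs m \<omega>) (X \<omega>)}) \<longlonglongrightarrow> 0)"

definition vupd :: "(int, 'N::finite) vec \<Rightarrow> 'N \<Rightarrow> int \<Rightarrow> (int, 'N) vec" where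
  "vupd a l c = (\<chi> k. if k = l then c else a $ k)"

text \<open>iter_lim M [l1,...,lk] F a X: X is the iterated limit in probability
  lim_{M_{l1}\<rightarrow>\<infinity>} ... lim_{M_{lk}\<rightarrow>\<infinity>} F(a'), where a' is a with coordinate l_i
  replaced by -M_{l_i}; the outermost limit corresponds to the first list element.\<close>
fun iter_lim :: "'w measure \<Rightarrow> ('N::finite) list \<Rightarrow> ((int, 'N) vec \<Rightarrow> 'w \<Rightarrow> real^'n) \<Rightarrow> (int, 'N) vec
    \<Rightarrow> ('w \<Rightarrow> real^'n) \<Rightarrow> bool" where
  "iter_lim M [] F a X \<longleftrightarrow> X = F a"
| "iter_lim M (l # ls) F a X \<longleftrightarrow>
     (\<exists>Xs. (\<forall>m. iter_lim M ls F (vupd a l (- int m)) (Xs m)) \<and> conv_prob M Xs X)"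

definition box_sum :: "('N::finite \<Rightarrow> real^'n^'n) \<Rightarrow> ((int, 'N) vec \<Rightarrow> 'w \<Rightarrow> real^'n)
    \<Rightarrow> (int, 'N) vec \<Rightarrow> (int, 'N) vec \<Rightarrow> 'w \<Rightarrow> real^'n" where
  "box_sum \<Theta> G t a \<omega> = (\<Sum>j\<in>{j. \<forall>l. a $ l \<le> j $ l \<and> j $ l \<le> t $ l}.
      mat_exp (tstar j \<Theta>) *v delta G j \<omega>)"

definition coords :: "'N::{finite,linorder} list" where
  "coords = sorted_list_of_set UNIV"

text \<open>The iterated series sum_{j=-\<infinity>}^t e^{j*Theta} Delta_j G converges in probability to X.\<close>
definition series_lim :: "'w measure \<Rightarrow> ('N::{finite,linorder} \<Rightarrow> real^'n^'n)
    \<Rightarrow> ((int, 'N) vec \<Rightarrow> 'w \<Rightarrow> real^'n) \<Rightarrow> (int, 'N) vec \<Rightarrow> ('w \<Rightarrow> real^'n) \<Rightarrow> bool" where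
  "series_lim M \<Theta> G t X \<longleftrightarrow> iter_lim M (coords :: 'N list) (box_sum \<Theta> G t) 0 X"

definition G_class :: "'w measure \<Rightarrow> ('N::{finite,linorder} \<Rightarrow> real^'n^'n)
    \<Rightarrow> ((int, 'N) vec \<Rightarrow> 'w \<Rightarrow> real^'n) \<Rightarrow> bool" where
  "G_class M \<Theta> G \<longleftrightarrow> stationary_increments M G \<and> (\<forall>t. \<exists>X. series_lim M \<Theta> G t X)"

definition G_class0 :: "'w measure \<Rightarrow> ('N::{finite,linorder} \<Rightarrow> real^'n^'n)
    \<Rightarrow> ((int, 'N) vec \<Rightarrow> 'w \<Rightarrow> real^'n) \<Rightarrow> bool" where
  "G_class0 M \<Theta> G \<longleftrightarrow> G_class M \<Theta> G \<and>
     (\<forall>t. (\<exists>l. t $ l = 0) \<longrightarrow> (AE \<omega> in M. G t \<omega> = 0))"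

text \<open>(M^{-1}_Theta G)_{e^t}: the (a.s. unique) limit in probability.\<close>
definition Minv :: "'w measure \<Rightarrow> ('N::{finite,linorder} \<Rightarrow> real^'n^'n)
    \<Rightarrow> ((int, 'N) vec \<Rightarrow> 'w \<Rightarrow> real^'n) \<Rightarrow> (int, 'N) vec \<Rightarrow> 'w \<Rightarrow> real^'n" where
  "Minv M \<Theta> G t = (SOME X. series_lim M \<Theta> G t X)"

definition M_range :: "(int, 'N::finite) vec \<Rightarrow> ((int, 'N) vec) set" where
  "M_range t = {j. \<forall>l. (0 \<le> t $ l \<longrightarrow> 1 \<le> j $ l \<and> j $ l \<le> t $ l) \<and>
                        (t $ l < 0 \<longrightarrow> t $ l + 1 \<le> j $ l \<and> j $ l \<le> 0)}"

definition M_op :: "('N::finite \<Rightarrow> real^'n^'n) \<Rightarrow> ((int, 'N) vec \<Rightarrow> 'w \<Rightarrow> real^'n)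
    \<Rightarrow> (int, 'N) vec \<Rightarrow> 'w \<Rightarrow> real^'n" where
  "M_op \<Theta> Y t \<omega> = (-1) ^ card {l. t $ l < 0} *\<^sub>R
     (\<Sum>j\<in>M_range t. mat_exp (- tstar j \<Theta>) *v delta Y j \<omega>)"

end

theory Submission
  imports Defs
begin

text \<open>
  Applied to the signed partial sums
  over M_range t, Delta returns the summand at t, so the increments of M_Theta Y are
  e^{-t*Theta} Delta_t Y; and a sum of increments over a box telescopes to an alternating sum over
  the corners of the box. Hence the partial series of M_Theta Y over [a, t] is an alternating sum
  of values of Y at corners, and every corner with a coordinate a_l -> -infinity tends to 0 in
  probability: by self-similarity Y at e^{p - m e_l} has the law of e^{-m Theta_l} Y_{e^p}, and
  e^{-Theta_l} is a strict contraction for positive definite Theta_l. Only the corner t survives.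

  Conversely, the increments of M_Theta^{-1} G are e^{j*Theta} Delta_j G, so M_Theta undoes
  M_Theta^{-1} up to values of G on the coordinate hyperplanes, which vanish for G in
  G_{Theta,0}. Self-similarity of M_Theta^{-1} G comes from the stationarity of the increments of
  G, because limits in probability preserve equality of finite-dimensional laws. A shift s <= 0
  only moves the lower summation bounds further out, and a general shift is a nonpositive one
  followed by a nonnegative one.
\<close>

section \<open>The matrix exponential\<close>

text \<open>Square matrices with the operator norm form a Banach algebra; this copy of
  \<open>real^'n^'n\<close> carries that structure so that the library's \<open>exp\<close> applies to it.\<close>

typedef (overloaded) ('n::finite) sqmat = "UNIV :: (real^'n^'n) set" ..

setup_lifting type_definition_sqmat

instantiation sqmat :: (finite) real_normed_vector
begin
lift_definition norm_sqmat :: "'a sqmat \<Rightarrow> real" is "\<lambda>A. onorm ((*v) A)" .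
lift_definition minus_sqmat :: "'a sqmat \<Rightarrow> 'a sqmat \<Rightarrow> 'a sqmat" is "(-)" .
lift_definition plus_sqmat :: "'a sqmat \<Rightarrow> 'a sqmat \<Rightarrow> 'a sqmat" is "(+)" .
lift_definition uminus_sqmat :: "'a sqmat \<Rightarrow> 'a sqmat" is "uminus" .
lift_definition zero_sqmat :: "'a sqmat" is "0" .
lift_definition scaleR_sqmat :: "real \<Rightarrow> 'a sqmat \<Rightarrow> 'a sqmat" is "scaleR" .
definition dist_sqmat :: "'a sqmat \<Rightarrow> 'a sqmat \<Rightarrow> real" where "dist_sqmat a b = norm (a - b)"
definition
  "(uniformity :: ('a sqmat \<times> 'a sqmat) filter) = (INF e\<in>{0 <..}. principal {(x, y). dist x y < e})"
definition open_sqmat :: "'a sqmat set \<Rightarrow> bool"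
  where "open_sqmat S = (\<forall>x\<in>S. \<forall>\<^sub>F (x', y) in uniformity. x' = x \<longrightarrow> y \<in> S)"
definition sgn_sqmat :: "'a sqmat \<Rightarrow> 'a sqmat" where "sgn_sqmat x = scaleR (inverse (norm x)) x"
instance
proof
  fix a b c :: "'a sqmat" and r s :: real
  show "a + b + c = a + (b + c)" by transfer (simp add: algebra_simps)
  show "a + b = b + a" by transfer (simp add: algebra_simps)
  show "0 + a = a" by transfer simp
  show "- a + a = 0" by transfer simp
  show "a - b = a + - b" by transfer simp
  show "r *\<^sub>R (a + b) = r *\<^sub>R a + r *\<^sub>R b" by transfer (simp add: algebra_simps)
  show "(r + s) *\<^sub>R a = r *\<^sub>R a + s *\<^sub>R a" by transfer (simp add: algebra_simps)
  show "r *\<^sub>R s *\<^sub>R a = (r * s) *\<^sub>R a" by transfer simp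
  show "1 *\<^sub>R a = a" by transfer simp
  show "dist a b = norm (a - b)" by (simp add: dist_sqmat_def)
  show "sgn a = inverse (norm a) *\<^sub>R a" by (simp add: sgn_sqmat_def)
  show "(norm a = 0) = (a = 0)"
    by transfer (auto simp: onorm_eq_0 onorm_zero, metis matrix_eq matrix_vector_mult_0)
  show "norm (a + b) \<le> norm a + norm b"
  proof transfer
    fix a b :: "real^'a^'a"
    have "(*v) (a + b) = (\<lambda>x. a *v x + b *v x)" by (auto simp: matrix_vector_mult_add_rdistrib)
    then show "onorm ((*v) (a + b)) \<le> onorm ((*v) a) + onorm ((*v) b)"
      by (simp add: onorm_triangle)
  qed
  show "norm (r *\<^sub>R a) = \<bar>r\<bar> * norm a"
  proof transfer
    fix r and a :: "real^'a^'a"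
    have "(*v) (r *\<^sub>R a) = (\<lambda>x. r *\<^sub>R (a *v x))" by (auto simp: scaleR_matrix_vector_assoc)
    then show "onorm ((*v) (r *\<^sub>R a)) = \<bar>r\<bar> * onorm ((*v) a)"
      by (simp add: onorm_scaleR)
  qed
qed (simp_all add: uniformity_sqmat_def open_sqmat_def)
end

instantiation sqmat :: (finite) real_normed_algebra_1
begin
lift_definition times_sqmat :: "'a sqmat \<Rightarrow> 'a sqmat \<Rightarrow> 'a sqmat" is "(**)" .
lift_definition one_sqmat :: "'a sqmat" is "mat 1" .
instance
proof
  fix a b c :: "'a sqmat" and r :: real
  show "a * b * c = a * (b * c)" by transfer (simp add: matrix_mul_assoc)
  show "1 * a = a" by transfer simp
  show "a * 1 = a" by transfer simp
  show "(a + b) * c = a * c + b * c"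
    by transfer (vector matrix_matrix_mult_def sum.distrib distrib_right)
  show "a * (b + c) = a * b + a * c" by transfer (simp add: matrix_add_ldistrib)
  show "(0::'a sqmat) \<noteq> 1"
  proof transfer
    obtain i :: 'a where True by auto
    have "(mat 1 :: real^'a^'a) $ i $ i = 1" by (simp add: mat_def)
    then show "(0::real^'a^'a) \<noteq> mat 1" by auto
  qed
  show "r *\<^sub>R a * b = r *\<^sub>R (a * b)" by transfer (simp add: scalar_matrix_assoc)
  show "a * r *\<^sub>R b = r *\<^sub>R (a * b)" by transfer (simp add: matrix_scalar_ac scalar_matrix_assoc)
  show "norm (1::'a sqmat) = 1"
  proof transfer
    have "(*v) (mat 1 :: real^'a^'a) = (\<lambda>x. x)" by auto
    then show "onorm ((*v) (mat 1 :: real^'a^'a)) = 1" by (simp add: onorm_id)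
  qed
  show "norm (a * b) \<le> norm a * norm b"
  proof transfer
    fix a b :: "real^'a^'a"
    have "(*v) (a ** b) = (*v) a \<circ> (*v) b" by (auto simp: matrix_vector_mul_assoc)
    then show "onorm ((*v) (a ** b)) \<le> onorm ((*v) a) * onorm ((*v) b)"
      by (simp add: onorm_compose)
  qed
qed
end

lemma abs_Rep_sqmat_entry_le: "\<bar>Rep_sqmat A $ i $ j\<bar> \<le> norm A"
  by transfer (rule matrix_component_le_onorm)

lemma bounded_linear_Rep_sqmat: "bounded_linear (Rep_sqmat :: 'n::finite sqmat \<Rightarrow> _)"
proof (rule bounded_linear_intro[where K="real CARD('n) * real CARD('n)"])
  fix x y :: "'n sqmat" and r
  show "Rep_sqmat (x + y) = Rep_sqmat x + Rep_sqmat y" by transfer simp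
  show "Rep_sqmat (r *\<^sub>R x) = r *\<^sub>R Rep_sqmat x" by transfer simp
  have "norm (Rep_sqmat x) \<le> (\<Sum>i\<in>UNIV. norm (Rep_sqmat x $ i))"
    unfolding norm_vec_def by (rule L2_set_le_sum) simp
  also have "\<dots> \<le> (\<Sum>i\<in>(UNIV::'n set). \<Sum>j\<in>(UNIV::'n set). \<bar>Rep_sqmat x $ i $ j\<bar>)"
    by (intro sum_mono norm_le_l1_cart)
  also have "\<dots> \<le> (\<Sum>i\<in>(UNIV::'n set). \<Sum>j\<in>(UNIV::'n set). norm x)"
    by (intro sum_mono abs_Rep_sqmat_entry_le)
  finally show "norm (Rep_sqmat x) \<le> norm x * (real CARD('n) * real CARD('n))"
    by (simp add: mult_ac)
qed

lemma norm_sqmat_le_entries: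
  "norm (A::'n::finite sqmat) \<le> (\<Sum>i\<in>UNIV. \<Sum>j\<in>UNIV. \<bar>Rep_sqmat A $ i $ j\<bar>)"
  by transfer (rule onorm_le_matrix_component_sum)

lemma Cauchy_Rep_sqmat_entry:
  assumes "Cauchy (X :: nat \<Rightarrow> 'n::finite sqmat)"
  shows "Cauchy (\<lambda>m. Rep_sqmat (X m) $ i $ j)"
proof (rule metric_CauchyI)
  fix e :: real assume "0 < e"
  then obtain M where M: "\<forall>m\<ge>M. \<forall>n\<ge>M. dist (X m) (X n) < e"
    using assms metric_CauchyD by blast
  have "dist (Rep_sqmat (X m) $ i $ j) (Rep_sqmat (X n) $ i $ j) \<le> dist (X m) (X n)" for m n
    using abs_Rep_sqmat_entry_le[of "X m - X n" i j]
    by (simp add: dist_real_def dist_norm minus_sqmat.rep_eq)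
  with M show "\<exists>M. \<forall>m\<ge>M. \<forall>n\<ge>M. dist (Rep_sqmat (X m) $ i $ j) (Rep_sqmat (X n) $ i $ j) < e"
    by (meson order_le_less_trans)
qed

instance sqmat :: (finite) banach
proof
  fix X :: "nat \<Rightarrow> 'a sqmat"
  assume "Cauchy X"
  then have "\<exists>L. (\<lambda>m. Rep_sqmat (X m) $ i $ j) \<longlonglongrightarrow> L" for i j
    using Cauchy_Rep_sqmat_entry Cauchy_convergent_iff convergent_def by blast
  then obtain L where L: "\<And>i j. (\<lambda>m. Rep_sqmat (X m) $ i $ j) \<longlonglongrightarrow> L i j" by metis
  define A where "A = Abs_sqmat (\<chi> i j. L i j)"
  have "(\<lambda>m. \<Sum>i\<in>UNIV. \<Sum>j\<in>UNIV. \<bar>Rep_sqmat (X m) $ i $ j - L i j\<bar>)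
      \<longlonglongrightarrow> (\<Sum>i\<in>(UNIV::'a set). \<Sum>j\<in>(UNIV::'a set). \<bar>L i j - L i j\<bar>)"
    by (intro tendsto_intros L)
  then have entries: "(\<lambda>m. \<Sum>i\<in>UNIV. \<Sum>j\<in>UNIV. \<bar>Rep_sqmat (X m) $ i $ j - L i j\<bar>) \<longlonglongrightarrow> 0"
    by simp
  have "norm (X m - A) \<le> (\<Sum>i\<in>UNIV. \<Sum>j\<in>UNIV. \<bar>Rep_sqmat (X m) $ i $ j - L i j\<bar>)" for m
    using norm_sqmat_le_entries[of "X m - A"]
    by (simp add: A_def minus_sqmat.rep_eq Abs_sqmat_inverse)
  then have "(\<lambda>m. norm (X m - A)) \<longlonglongrightarrow> 0"
    by (intro Lim_null_comparison[OF _ entries]) simp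
  then show "convergent X"
    by (auto simp: convergent_def tendsto_norm_zero_iff LIM_zero_iff)
qed

lemma Rep_sqmat_mult: "Rep_sqmat (A * B) = Rep_sqmat A ** Rep_sqmat B"
  by transfer simp

lemma Rep_sqmat_one: "Rep_sqmat 1 = mat 1"
  by transfer simp

lemma Abs_sqmat_add: "Abs_sqmat (A + B) = Abs_sqmat A + Abs_sqmat B"
  by (simp add: plus_sqmat_def Abs_sqmat_inverse)

lemma Abs_sqmat_mult: "Abs_sqmat (A ** B) = Abs_sqmat A * Abs_sqmat B"
  by (simp add: times_sqmat_def Abs_sqmat_inverse)

lemma Abs_sqmat_uminus: "Abs_sqmat (- A) = - Abs_sqmat A"
  by (simp add: uminus_sqmat_def Abs_sqmat_inverse)

lemma Abs_sqmat_scaleR: "Abs_sqmat (r *\<^sub>R A) = r *\<^sub>R Abs_sqmat A"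
  by (simp add: scaleR_sqmat_def Abs_sqmat_inverse)

lemma Abs_sqmat_sum: "Abs_sqmat (\<Sum>i\<in>I. f i) = (\<Sum>i\<in>I. Abs_sqmat (f i))"
  by (induct I rule: infinite_finite_induct) (simp_all add: zero_sqmat_def Abs_sqmat_add)

lemma mat_exp_eq_exp: "mat_exp A = Rep_sqmat (exp (Abs_sqmat A))"
proof -
  have power: "Rep_sqmat (Abs_sqmat A ^ k) = matpow A k" for k
    by (induct k) (simp_all add: Rep_sqmat_mult Rep_sqmat_one Abs_sqmat_inverse)
  have "Rep_sqmat (exp (Abs_sqmat A)) = (\<Sum>k. Rep_sqmat (Abs_sqmat A ^ k /\<^sub>R fact k))"
    unfolding exp_def by (rule bounded_linear.suminf[OF bounded_linear_Rep_sqmat summable_exp_generic])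
  also have "\<dots> = mat_exp A"
    by (simp add: mat_exp_def scaleR_sqmat.rep_eq power divide_inverse_commute)
  finally show ?thesis ..
qed

lemma mat_exp_add_commuting:
  assumes "A ** B = B ** A"
  shows "mat_exp (A + B) = mat_exp A ** mat_exp B"
proof -
  have "Abs_sqmat A * Abs_sqmat B = Abs_sqmat B * Abs_sqmat A"
    using assms by (metis Abs_sqmat_mult)
  then show ?thesis
    by (simp add: mat_exp_eq_exp Abs_sqmat_add exp_add_commuting Rep_sqmat_mult)
qed

lemma mat_exp_minus_inverse: "mat_exp (- A) ** mat_exp A = mat 1"
  using exp_minus_inverse[of "- Abs_sqmat A"]
  by (simp add: mat_exp_eq_exp Abs_sqmat_uminus Rep_sqmat_mult[symmetric] Rep_sqmat_one)

lemma mat_exp_minus_cancel: "mat_exp (- A) *v (mat_exp A *v v) = v"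
  by (simp add: matrix_vector_mul_assoc mat_exp_minus_inverse)

lemma mat_exp_cancel_minus: "mat_exp A *v (mat_exp (- A) *v v) = v"
  using mat_exp_minus_cancel[of "- A"] by simp

lemma bounded_linear_Rep_sqmat_apply: "bounded_linear (\<lambda>A::'n::finite sqmat. Rep_sqmat A *v x)"
proof -
  have "linear (\<lambda>A::real^'n^'n. A *v x)"
    by (rule linearI) (simp_all add: matrix_vector_mult_add_rdistrib scaleR_matrix_vector_assoc)
  then show ?thesis
    by (intro bounded_linear_compose[OF _ bounded_linear_Rep_sqmat])
       (simp add: linear_conv_bounded_linear)
qed

text \<open>Along \<open>y t = exp (- t B) x\<close> the derivative of \<open>\<parallel>y t\<parallel>\<^sup>2\<close> is \<open>-2 \<langle>y t, B y t\<rangle> < 0\<close>.\<close>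

lemma norm_exp_minus_pos_def_less:
  fixes B :: "'n::finite sqmat"
  assumes pd: "\<forall>x. x \<noteq> 0 \<longrightarrow> 0 < x \<bullet> (Rep_sqmat B *v x)" and "x \<noteq> 0"
  shows "norm (Rep_sqmat (exp (- B)) *v x) < norm x"
proof -
  define y where "y t = Rep_sqmat (exp (t *\<^sub>R (- B))) *v x" for t
  define f where "f t = y t \<bullet> y t" for t
  have y': "(y has_derivative (\<lambda>h. h *\<^sub>R - (Rep_sqmat B *v y t))) (at t)" for t
  proof -
    have "(y has_vector_derivative Rep_sqmat ((- B) * exp (t *\<^sub>R (- B))) *v x) (at t)"
      unfolding y_def
      by (rule bounded_linear.has_vector_derivative[OF bounded_linear_Rep_sqmat_apply
            exp_scaleR_has_vector_derivative_left])
    moreover have "(- C) *v v = - (C *v v)" for C :: "real^'n^'n" and v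
      by (simp add: matrix_vector_mult_def vec_eq_iff sum_negf)
    then have "Rep_sqmat ((- B) * exp (t *\<^sub>R (- B))) *v x = - (Rep_sqmat B *v y t)"
      by (simp add: y_def Rep_sqmat_mult uminus_sqmat.rep_eq matrix_vector_mul_assoc[symmetric])
    ultimately show ?thesis by (simp add: has_vector_derivative_def)
  qed
  have y_nonzero: "y t \<noteq> 0" for t
  proof
    assume "y t = 0"
    have "Rep_sqmat (exp (- (t *\<^sub>R (- B)))) ** Rep_sqmat (exp (t *\<^sub>R (- B))) = mat 1"
      using exp_minus_inverse[of "- (t *\<^sub>R (- B))"]
      by (simp add: Rep_sqmat_mult[symmetric] Rep_sqmat_one)
    then have "x = Rep_sqmat (exp (- (t *\<^sub>R (- B)))) *v y t"
      by (simp add: y_def matrix_vector_mul_assoc)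
    with \<open>y t = 0\<close> \<open>x \<noteq> 0\<close> show False by simp
  qed
  have "DERIV f t :> - 2 * (y t \<bullet> (Rep_sqmat B *v y t))" for t
  proof -
    have "(f has_derivative (\<lambda>h. y t \<bullet> (h *\<^sub>R - (Rep_sqmat B *v y t))
        + (h *\<^sub>R - (Rep_sqmat B *v y t)) \<bullet> y t)) (at t)"
      unfolding f_def[abs_def] by (rule has_derivative_inner[OF y' y'])
    then show ?thesis
      unfolding has_field_derivative_def
      by (rule has_derivative_eq_rhs) (simp add: fun_eq_iff inner_commute[of _ "y t"] algebra_simps)
  qed
  moreover have "- 2 * (y t \<bullet> (Rep_sqmat B *v y t)) < 0" for t
    using pd y_nonzero[of t] by auto
  ultimately have "f 1 < f 0"
    using DERIV_neg_imp_decreasing[of 0 1 f] by fastforce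
  then have "norm (y 1) < norm (y 0)"
    by (simp add: f_def power2_norm_eq_inner[symmetric] power_less_imp_less_base)
  then show ?thesis by (simp add: y_def Rep_sqmat_one)
qed

text \<open>Compactness of the unit sphere turns the pointwise contraction into a uniform one.\<close>

lemma exp_minus_pos_def_contraction:
  fixes B :: "'n::finite sqmat"
  assumes pd: "\<forall>x. x \<noteq> 0 \<longrightarrow> 0 < x \<bullet> (Rep_sqmat B *v x)"
  obtains q where "0 \<le> q" "q < 1" "\<And>x. norm (Rep_sqmat (exp (- B)) *v x) \<le> q * norm x"
proof -
  define g where "g v = norm (Rep_sqmat (exp (- B)) *v v)" for v :: "real^'n"
  have "continuous_on (sphere 0 1) g"
    unfolding g_def by (intro continuous_intros)
  moreover obtain b :: "real^'n" where "b \<in> Basis" using nonempty_Basis by blast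
  then have "b \<in> sphere 0 1" by simp
  then have "sphere (0::real^'n) 1 \<noteq> {}" by blast
  ultimately obtain x0 where x0: "x0 \<in> sphere 0 1" "\<forall>v\<in>sphere 0 1. g v \<le> g x0"
    using continuous_attains_sup[OF compact_sphere] by blast
  then have "x0 \<noteq> 0" by auto
  then have "g x0 < 1"
    using norm_exp_minus_pos_def_less[OF pd, of x0] x0(1) by (simp add: g_def)
  moreover have "norm (Rep_sqmat (exp (- B)) *v x) \<le> g x0 * norm x" for x
  proof (cases "x = 0")
    case False
    then have "g ((1 / norm x) *\<^sub>R x) \<le> g x0" using x0 by simp
    with False show ?thesis by (simp add: g_def matrix_vector_mult_scaleR field_simps)
  qed simp
  ultimately show ?thesis using that[of "g x0"] by (simp add: g_def)
qed

lemma exp_real_scaleR: "exp (real m *\<^sub>R (B::'a::{real_normed_algebra_1,banach})) = exp B ^ m"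
proof (induct m)
  case (Suc m)
  have "exp (real (Suc m) *\<^sub>R B) = exp (B + real m *\<^sub>R B)"
    by (simp add: scaleR_add_left)
  also have "\<dots> = exp B * exp (real m *\<^sub>R B)"
    by (rule exp_add_commuting) (simp add: mult_scaleR_left mult_scaleR_right)
  finally show ?case using Suc by simp
qed simp

lemma mat_exp_pos_def_decay:
  assumes "pos_def_mat A"
  obtains q where "0 \<le> q" "q < 1"
    "\<And>(m::nat) x. norm (mat_exp (- (real m *\<^sub>R A)) *v x) \<le> q ^ m * norm x"
proof -
  have "\<forall>x. x \<noteq> 0 \<longrightarrow> 0 < x \<bullet> (Rep_sqmat (Abs_sqmat A) *v x)"
    using assms by (simp add: pos_def_mat_def Abs_sqmat_inverse)
  then obtain q where q: "0 \<le> q" "q < 1"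
      "\<And>x. norm (Rep_sqmat (exp (- Abs_sqmat A)) *v x) \<le> q * norm x"
    using exp_minus_pos_def_contraction by blast
  have "norm (Rep_sqmat (exp (- Abs_sqmat A) ^ m) *v x) \<le> q ^ m * norm x" for m x
  proof (induct m)
    case (Suc m)
    have "norm (Rep_sqmat (exp (- Abs_sqmat A) ^ Suc m) *v x)
        = norm (Rep_sqmat (exp (- Abs_sqmat A)) *v (Rep_sqmat (exp (- Abs_sqmat A) ^ m) *v x))"
      by (simp add: Rep_sqmat_mult matrix_vector_mul_assoc)
    also have "\<dots> \<le> q * (q ^ m * norm x)"
      using q(3) mult_left_mono[OF Suc q(1)] by (rule order_trans)
    finally show ?case by simp
  qed (simp add: Rep_sqmat_one)
  moreover have "mat_exp (- (real m *\<^sub>R A)) = Rep_sqmat (exp (- Abs_sqmat A) ^ m)" for m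
    by (simp add: mat_exp_eq_exp Abs_sqmat_uminus Abs_sqmat_scaleR exp_real_scaleR[symmetric])
  ultimately show ?thesis using that q(1,2) by auto
qed

lemma tstar_add: "tstar (s + t) \<Theta> = tstar s \<Theta> + tstar t \<Theta>"
  unfolding tstar_def by (simp add: scaleR_add_left sum.distrib)

lemma tstar_minus: "tstar (- s) \<Theta> = - tstar s \<Theta>"
  unfolding tstar_def by (simp add: sum_negf)

lemma tstar_commute:
  assumes "\<forall>i j. \<Theta> i ** \<Theta> j = \<Theta> j ** \<Theta> i"
  shows "tstar s \<Theta> ** tstar t \<Theta> = tstar t \<Theta> ** tstar s \<Theta>"
proof -
  have c: "Abs_sqmat (\<Theta> i) * Abs_sqmat (\<Theta> j) = Abs_sqmat (\<Theta> j) * Abs_sqmat (\<Theta> i)" for i j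
    using assms by (metis Abs_sqmat_mult)
  have "Abs_sqmat (tstar s \<Theta>) * Abs_sqmat (tstar t \<Theta>)
      = Abs_sqmat (tstar t \<Theta>) * Abs_sqmat (tstar s \<Theta>)"
    unfolding tstar_def Abs_sqmat_sum Abs_sqmat_scaleR sum_distrib_left sum_distrib_right
    by (subst sum.swap) (intro sum.cong refl, simp add: c)
  then show ?thesis by (metis Abs_sqmat_mult Abs_sqmat_inject UNIV_I)
qed

lemma mat_exp_tstar_add:
  assumes "\<forall>i j. \<Theta> i ** \<Theta> j = \<Theta> j ** \<Theta> i"
  shows "mat_exp (tstar (s + t) \<Theta>) = mat_exp (tstar s \<Theta>) ** mat_exp (tstar t \<Theta>)"
  unfolding tstar_add by (rule mat_exp_add_commuting[OF tstar_commute[OF assms]])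

section \<open>Convergence in probability\<close>

lemma conv_prob_measurable:
  assumes "conv_prob M Xs X"
  shows "X \<in> borel_measurable M" "Xs m \<in> borel_measurable M"
  using assms by (auto simp: conv_prob_def)

context prob_space
begin

lemma prob_less_le_half_add:
  fixes a b d :: "'a \<Rightarrow> real"
  assumes [measurable]: "a \<in> borel_measurable M" "b \<in> borel_measurable M" "d \<in> borel_measurable M"
    and le: "\<And>\<omega>. \<omega> \<in> space M \<Longrightarrow> d \<omega> \<le> a \<omega> + b \<omega>"
  shows "prob {\<omega>\<in>space M. e < d \<omega>}
    \<le> prob {\<omega>\<in>space M. e / 2 < a \<omega>} + prob {\<omega>\<in>space M. e / 2 < b \<omega>}"
proof -
  have "e / 2 < a \<omega> \<or> e / 2 < b \<omega>" if "\<omega> \<in> space M" "e < d \<omega>" for \<omega>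
    using le[OF that(1)] that(2) by linarith
  then have "{\<omega>\<in>space M. e < d \<omega>} \<subseteq> {\<omega>\<in>space M. e / 2 < a \<omega>} \<union> {\<omega>\<in>space M. e / 2 < b \<omega>}"
    by blast
  then have "prob {\<omega>\<in>space M. e < d \<omega>}
      \<le> prob ({\<omega>\<in>space M. e / 2 < a \<omega>} \<union> {\<omega>\<in>space M. e / 2 < b \<omega>})"
    by (intro finite_measure_mono) measurable
  also have "\<dots> \<le> prob {\<omega>\<in>space M. e / 2 < a \<omega>} + prob {\<omega>\<in>space M. e / 2 < b \<omega>}"
    by (intro measure_subadditive) (simp_all add: emeasure_finite)
  finally show ?thesis .
qed

lemma conv_prob_const:
  assumes [measurable]: "X \<in> borel_measurable M"
  shows "conv_prob M (\<lambda>m. X) X"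
  unfolding conv_prob_def by (auto simp: not_less[symmetric])

lemma conv_prob_add:
  assumes X: "conv_prob M Xs X" and Y: "conv_prob M Ys Y"
  shows "conv_prob M (\<lambda>m \<omega>. Xs m \<omega> + Ys m \<omega>) (\<lambda>\<omega>. X \<omega> + Y \<omega>)"
proof -
  note [measurable] = conv_prob_measurable[OF X] conv_prob_measurable[OF Y]
  have "(\<lambda>m. prob {\<omega>\<in>space M. e < dist (Xs m \<omega> + Ys m \<omega>) (X \<omega> + Y \<omega>)}) \<longlonglongrightarrow> 0"
    if "e > 0" for e
  proof (rule tendsto_sandwich[OF _ _ tendsto_const tendsto_add_zero])
    show "\<forall>\<^sub>F m in sequentially. prob {\<omega>\<in>space M. e < dist (Xs m \<omega> + Ys m \<omega>) (X \<omega> + Y \<omega>)}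
        \<le> prob {\<omega>\<in>space M. e / 2 < dist (Xs m \<omega>) (X \<omega>)}
          + prob {\<omega>\<in>space M. e / 2 < dist (Ys m \<omega>) (Y \<omega>)}"
      by (intro always_eventually allI prob_less_le_half_add dist_triangle_add) measurable
    show "(\<lambda>m. prob {\<omega>\<in>space M. e / 2 < dist (Xs m \<omega>) (X \<omega>)}) \<longlonglongrightarrow> 0"
      "(\<lambda>m. prob {\<omega>\<in>space M. e / 2 < dist (Ys m \<omega>) (Y \<omega>)}) \<longlonglongrightarrow> 0"
      using X Y half_gt_zero[OF \<open>e > 0\<close>] unfolding conv_prob_def by blast+
  qed simp
  then show ?thesis using X Y by (simp add: conv_prob_def)
qed

lemma conv_prob_sum:
  assumes "finite I" "\<And>i. i \<in> I \<Longrightarrow> conv_prob M (Xs i) (X i)"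
  shows "conv_prob M (\<lambda>m \<omega>. \<Sum>i\<in>I. Xs i m \<omega>) (\<lambda>\<omega>. \<Sum>i\<in>I. X i \<omega>)"
  using assms
proof (induct I rule: finite_induct)
  case empty
  then show ?case using conv_prob_const[of "\<lambda>_. 0"] by simp
next
  case (insert i I)
  then show ?case
    using conv_prob_add[of "Xs i" "X i" "\<lambda>m \<omega>. \<Sum>i\<in>I. Xs i m \<omega>" "\<lambda>\<omega>. \<Sum>i\<in>I. X i \<omega>"] by simp
qed

lemma conv_prob_bounded_linear:
  assumes f: "bounded_linear f" and X: "conv_prob M Xs X"
  shows "conv_prob M (\<lambda>m \<omega>. f (Xs m \<omega>)) (\<lambda>\<omega>. f (X \<omega>))"
proof -
  have [measurable]: "f \<in> borel_measurable borel"
    using f by (intro borel_measurable_continuous_onI linear_continuous_on)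
  note [measurable] = conv_prob_measurable[OF X]
  obtain K where K: "K > 0" "\<And>x. norm (f x) \<le> norm x * K"
    using bounded_linear.pos_bounded[OF f] by blast
  have "dist (f x) (f y) \<le> dist x y * K" for x y
    using K(2)[of "x - y"] by (simp add: dist_norm linear_diff[OF bounded_linear.linear[OF f]])
  then have sub: "{\<omega>\<in>space M. e < dist (f (Xs m \<omega>)) (f (X \<omega>))}
      \<subseteq> {\<omega>\<in>space M. e / K < dist (Xs m \<omega>) (X \<omega>)}" for e m
    using K(1) by (auto simp: divide_less_eq intro: less_le_trans)
  have "(\<lambda>m. prob {\<omega>\<in>space M. e < dist (f (Xs m \<omega>)) (f (X \<omega>))}) \<longlonglongrightarrow> 0" if "e > 0" for e
  proof (rule tendsto_sandwich[OF _ _ tendsto_const])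
    show "\<forall>\<^sub>F m in sequentially. prob {\<omega>\<in>space M. e < dist (f (Xs m \<omega>)) (f (X \<omega>))}
        \<le> prob {\<omega>\<in>space M. e / K < dist (Xs m \<omega>) (X \<omega>)}"
      using sub by (intro always_eventually allI finite_measure_mono) measurable
    show "(\<lambda>m. prob {\<omega>\<in>space M. e / K < dist (Xs m \<omega>) (X \<omega>)}) \<longlonglongrightarrow> 0"
      using X \<open>e > 0\<close> K(1) by (simp add: conv_prob_def)
  qed simp
  then show ?thesis using X by (simp add: conv_prob_def)
qed

lemma conv_prob_cong_AE:
  assumes X: "conv_prob M Xs X"
    and eq: "\<forall>\<^sub>F m in sequentially. AE \<omega> in M. Ys m \<omega> = Xs m \<omega>"
    and [measurable]: "\<And>m. Ys m \<in> borel_measurable M" "Y \<in> borel_measurable M"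
    and Y: "AE \<omega> in M. Y \<omega> = X \<omega>"
  shows "conv_prob M Ys Y"
proof -
  note [measurable] = conv_prob_measurable[OF X]
  have "(\<lambda>m. prob {\<omega>\<in>space M. e < dist (Ys m \<omega>) (Y \<omega>)}) \<longlonglongrightarrow> 0" if "e > 0" for e
  proof (rule Lim_transform_eventually)
    show "(\<lambda>m. prob {\<omega>\<in>space M. e < dist (Xs m \<omega>) (X \<omega>)}) \<longlonglongrightarrow> 0"
      using X \<open>e > 0\<close> by (simp add: conv_prob_def)
    show "\<forall>\<^sub>F m in sequentially. prob {\<omega>\<in>space M. e < dist (Xs m \<omega>) (X \<omega>)}
        = prob {\<omega>\<in>space M. e < dist (Ys m \<omega>) (Y \<omega>)}"
      using eq
    proof eventually_elim
      case (elim m)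
      show ?case
      proof (rule finite_measure_eq_AE)
        show "AE \<omega> in M. (\<omega> \<in> {\<omega>\<in>space M. e < dist (Xs m \<omega>) (X \<omega>)})
            = (\<omega> \<in> {\<omega>\<in>space M. e < dist (Ys m \<omega>) (Y \<omega>)})"
          using elim Y by eventually_elim auto
      qed measurable
    qed
  qed
  then show ?thesis by (simp add: conv_prob_def)
qed

lemma AE_eq_if_prob_dist_less_zero:
  fixes X Y :: "'a \<Rightarrow> 'b::{metric_space, second_countable_topology}"
  assumes [measurable]: "X \<in> borel_measurable M" "Y \<in> borel_measurable M"
    and null: "\<And>e. e > 0 \<Longrightarrow> prob {\<omega>\<in>space M. e < dist (X \<omega>) (Y \<omega>)} = 0"
  shows "AE \<omega> in M. X \<omega> = Y \<omega>"
proof -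
  have "AE \<omega> in M. \<not> 1 / Suc k < dist (X \<omega>) (Y \<omega>)" for k
  proof -
    have "{\<omega>\<in>space M. 1 / Suc k < dist (X \<omega>) (Y \<omega>)} \<in> sets M" by measurable
    with null[of "1 / Suc k"] show ?thesis by (simp add: prob_Collect_eq_0)
  qed
  then have "AE \<omega> in M. \<forall>k::nat. \<not> 1 / Suc k < dist (X \<omega>) (Y \<omega>)"
    by (simp add: AE_all_countable)
  then show ?thesis
  proof eventually_elim
    case (elim \<omega>)
    show ?case
    proof (rule ccontr)
      assume "X \<omega> \<noteq> Y \<omega>"
      then obtain k where "inverse (real (Suc k)) < dist (X \<omega>) (Y \<omega>)"
        using reals_Archimedean zero_less_dist_iff by blast
      with elim show False by (simp add: inverse_eq_divide)
    qed
  qed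
qed

lemma conv_prob_unique_AE:
  assumes X: "conv_prob M Xs X" and Y: "conv_prob M Xs Y"
  shows "AE \<omega> in M. X \<omega> = Y \<omega>"
proof (rule AE_eq_if_prob_dist_less_zero)
  note [measurable] = conv_prob_measurable[OF X] conv_prob_measurable[OF Y]
  show "X \<in> borel_measurable M" "Y \<in> borel_measurable M" by simp_all
  fix e :: real assume "e > 0"
  have "prob {\<omega>\<in>space M. e < dist (X \<omega>) (Y \<omega>)} \<le> 0"
  proof (rule LIMSEQ_le_const[OF tendsto_add_zero])
    show "(\<lambda>m. prob {\<omega>\<in>space M. e / 2 < dist (Xs m \<omega>) (X \<omega>)}) \<longlonglongrightarrow> 0"
      "(\<lambda>m. prob {\<omega>\<in>space M. e / 2 < dist (Xs m \<omega>) (Y \<omega>)}) \<longlonglongrightarrow> 0"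
      using X Y half_gt_zero[OF \<open>e > 0\<close>] unfolding conv_prob_def by blast+
    show "\<exists>N. \<forall>m\<ge>N. prob {\<omega>\<in>space M. e < dist (X \<omega>) (Y \<omega>)}
        \<le> prob {\<omega>\<in>space M. e / 2 < dist (Xs m \<omega>) (X \<omega>)}
          + prob {\<omega>\<in>space M. e / 2 < dist (Xs m \<omega>) (Y \<omega>)}"
      by (intro exI allI impI prob_less_le_half_add dist_triangle3) measurable
  qed
  then show "prob {\<omega>\<in>space M. e < dist (X \<omega>) (Y \<omega>)} = 0"
    using measure_nonneg[of M] by (simp add: antisym)
qed

lemma conv_prob_shift:
  "conv_prob M Xs X \<Longrightarrow> conv_prob M (\<lambda>m. Xs (m + k)) X"
  unfolding conv_prob_def by (auto intro: LIMSEQ_ignore_initial_segment[where a=0, simplified])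

text \<open>A single random variable is tight: its tail \<open>\<parallel>Z\<parallel> > k\<close> has vanishing probability.\<close>

lemma conv_prob_zero_if_dominated:
  fixes Xs :: "nat \<Rightarrow> 'a \<Rightarrow> real^'n" and Z :: "'a \<Rightarrow> real^'k"
  assumes [measurable]: "Z \<in> borel_measurable M" "\<And>m. Xs m \<in> borel_measurable M"
    and c: "c \<longlonglongrightarrow> 0" "\<And>m. 0 \<le> c m"
    and dominated: "\<And>m e. prob {\<omega>\<in>space M. e < norm (Xs m \<omega>)}
                            \<le> prob {\<omega>\<in>space M. e < c m * norm (Z \<omega>)}"
  shows "conv_prob M Xs (\<lambda>\<omega>. 0)"
proof -
  define A where "A k = {\<omega>\<in>space M. real k < norm (Z \<omega>)}" for k :: nat
  have A_sets[measurable]: "A k \<in> sets M" for k unfolding A_def by measurable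
  have "decseq A" unfolding decseq_def A_def by auto
  moreover have "(\<Inter>k. A k) = {}"
  proof safe
    fix \<omega> assume "\<omega> \<in> (\<Inter>k. A k)"
    then have "real k < norm (Z \<omega>)" for k by (auto simp: A_def)
    moreover obtain k :: nat where "norm (Z \<omega>) < real k" using reals_Archimedean2 by blast
    ultimately show "\<omega> \<in> {}" using less_asym by blast
  qed
  ultimately have tail: "(\<lambda>k. prob (A k)) \<longlonglongrightarrow> 0"
    using finite_Lim_measure_decseq[of A] A_sets by (simp add: image_subset_iff)
  have "(\<lambda>m. prob {\<omega>\<in>space M. e < dist (Xs m \<omega>) 0}) \<longlonglongrightarrow> 0" if "e > 0" for e
  proof (rule order_tendstoI)
    fix r :: real assume "r < 0"
    then show "\<forall>\<^sub>F m in sequentially. r < prob {\<omega>\<in>space M. e < dist (Xs m \<omega>) 0}"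
      by (intro always_eventually allI) (metis measure_nonneg order.strict_trans2)
  next
    fix r :: real assume "0 < r"
    have "\<forall>\<^sub>F k in sequentially. prob (A k) < r"
      using tail \<open>0 < r\<close> by (rule order_tendstoD(2))
    then obtain k where k: "prob (A k) < r"
      by (auto simp: eventually_sequentially)
    have "\<forall>\<^sub>F m in sequentially. c m < e / (real k + 1)"
      using c(1) \<open>e > 0\<close> by (intro order_tendstoD(2)) (auto intro: divide_pos_pos)
    then show "\<forall>\<^sub>F m in sequentially. prob {\<omega>\<in>space M. e < dist (Xs m \<omega>) 0} < r"
    proof eventually_elim
      case (elim m)
      have "{\<omega>\<in>space M. e < c m * norm (Z \<omega>)} \<subseteq> A k"
      proof safe
        fix \<omega> assume "\<omega> \<in> space M" "e < c m * norm (Z \<omega>)"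
        moreover have "c m * norm (Z \<omega>) < e" if "norm (Z \<omega>) \<le> real k"
        proof -
          have "c m * norm (Z \<omega>) \<le> c m * (real k + 1)"
            using that c(2)[of m] by (intro mult_left_mono) auto
          also have "\<dots> < e" using elim by (simp add: field_simps)
          finally show ?thesis .
        qed
        ultimately show "\<omega> \<in> A k" by (auto simp: A_def not_less[symmetric])
      qed
      then have "prob {\<omega>\<in>space M. e < c m * norm (Z \<omega>)} \<le> prob (A k)"
        by (intro finite_measure_mono A_sets)
      with dominated[of e m] k show ?case by simp
    qed
  qed
  then show ?thesis unfolding conv_prob_def by auto
qed

end

section \<open>Finite-dimensional laws\<close>

lemma eq_law_sym: "eq_law M X X' \<Longrightarrow> eq_law M X' X"
  unfolding eq_law_def by metis

lemma eq_law_trans: "eq_law M X X' \<Longrightarrow> eq_law M X' X'' \<Longrightarrow> eq_law M X X''"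
  unfolding eq_law_def by metis

lemma eq_law_compose:
  fixes X X' :: "'i \<Rightarrow> 'w \<Rightarrow> 'b::topological_space" and Z Z' :: "'j \<Rightarrow> 'w \<Rightarrow> 'c::topological_space"
  assumes [measurable]: "\<And>i. X i \<in> borel_measurable M" "\<And>i. X' i \<in> borel_measurable M"
    and eq: "eq_law M X X'"
    and K: "\<And>u. finite (K u)" and h: "\<And>u. h u \<in> borel_measurable (PiM (K u) (\<lambda>_. borel))"
    and Z: "\<And>u \<omega>. Z u \<omega> = h u (restrict (\<lambda>i. X i \<omega>) (K u))"
    and Z': "\<And>u \<omega>. Z' u \<omega> = h u (restrict (\<lambda>i. X' i \<omega>) (K u))"
  shows "eq_law M Z Z'"
  unfolding eq_law_def
proof (intro allI impI)
  fix T :: "'j set" assume T: "finite T"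
  define KT where "KT = (\<Union>u\<in>T. K u)"
  define \<Psi> where "\<Psi> z = restrict (\<lambda>u. h u (restrict z (K u))) T" for z :: "'i \<Rightarrow> 'b"
  have \<Psi>: "\<Psi> \<in> measurable (PiM KT (\<lambda>_. borel)) (PiM T (\<lambda>_. borel))"
    unfolding \<Psi>_def
  proof (rule measurable_restrict)
    fix u assume "u \<in> T"
    then have "K u \<subseteq> KT" by (auto simp: KT_def)
    from measurable_comp[OF measurable_restrict_subset[OF this] h[of u]]
    show "(\<lambda>z. h u (restrict z (K u))) \<in> borel_measurable (PiM KT (\<lambda>_. borel))"
      by (simp add: comp_def)
  qed
  have R: "(\<lambda>\<omega>. restrict (\<lambda>i. X i \<omega>) KT) \<in> measurable M (PiM KT (\<lambda>_. borel))"
    "(\<lambda>\<omega>. restrict (\<lambda>i. X' i \<omega>) KT) \<in> measurable M (PiM KT (\<lambda>_. borel))"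
    by (auto intro: measurable_restrict)
  have "restrict (restrict f KT) (K u) = restrict f (K u)" "KT \<inter> K u = K u"
    if "u \<in> T" for f :: "'i \<Rightarrow> 'b" and u
    using that by (auto simp: restrict_def KT_def fun_eq_iff)
  then have factor: "(\<lambda>\<omega>. restrict (\<lambda>u. Z u \<omega>) T) = \<Psi> \<circ> (\<lambda>\<omega>. restrict (\<lambda>i. X i \<omega>) KT)"
    "(\<lambda>\<omega>. restrict (\<lambda>u. Z' u \<omega>) T) = \<Psi> \<circ> (\<lambda>\<omega>. restrict (\<lambda>i. X' i \<omega>) KT)"
    by (auto simp: \<Psi>_def Z Z' restrict_def[of _ T] fun_eq_iff)
  have "finite KT" using T K by (simp add: KT_def)
  with eq have "distr M (PiM KT (\<lambda>_. borel)) (\<lambda>\<omega>. restrict (\<lambda>i. X i \<omega>) KT)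
      = distr M (PiM KT (\<lambda>_. borel)) (\<lambda>\<omega>. restrict (\<lambda>i. X' i \<omega>) KT)"
    unfolding eq_law_def by blast
  then show "distr M (PiM T (\<lambda>_. borel)) (\<lambda>\<omega>. restrict (\<lambda>u. Z u \<omega>) T)
      = distr M (PiM T (\<lambda>_. borel)) (\<lambda>\<omega>. restrict (\<lambda>u. Z' u \<omega>) T)"
    unfolding factor distr_distr[OF \<Psi> R(1), symmetric] distr_distr[OF \<Psi> R(2), symmetric] by simp
qed

lemma eq_law_compose_pointwise:
  fixes X X' :: "'i \<Rightarrow> 'w \<Rightarrow> 'b::topological_space" and f :: "'j \<Rightarrow> 'b \<Rightarrow> 'c::topological_space"
  assumes "\<And>i. X i \<in> borel_measurable M" "\<And>i. X' i \<in> borel_measurable M"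
    and "eq_law M X X'" and f: "\<And>u. f u \<in> borel_measurable borel"
  shows "eq_law M (\<lambda>u \<omega>. f u (X (g u) \<omega>)) (\<lambda>u \<omega>. f u (X' (g u) \<omega>))"
proof (rule eq_law_compose[OF assms(1-3), where K="\<lambda>u. {g u}" and h="\<lambda>u z. f u (z (g u))"])
  show "(\<lambda>z. f u (z (g u))) \<in> borel_measurable (PiM {g u} (\<lambda>_. borel))" for u
    using measurable_comp[OF measurable_component_singleton[of "g u" "{g u}" "\<lambda>_. borel"] f[of u]]
    by (simp add: comp_def)
qed auto

lemma sets_Collect_restrict_PiE:
  fixes X :: "'i \<Rightarrow> 'a \<Rightarrow> 'b::topological_space"
  assumes "finite T" "\<And>t. t \<in> T \<Longrightarrow> X t \<in> borel_measurable M"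
    "\<And>t. t \<in> T \<Longrightarrow> F t \<in> sets borel"
  shows "{\<omega>\<in>space M. \<forall>t\<in>T. X t \<omega> \<in> F t} \<in> sets M"
proof -
  have "(\<lambda>\<omega>. restrict (\<lambda>t. X t \<omega>) T) \<in> measurable M (PiM T (\<lambda>_. borel))"
    using assms(2) by (rule measurable_restrict)
  moreover have "PiE T F \<in> sets (PiM T (\<lambda>_. borel))"
    using assms(1,3) by (intro sets_PiM_I_finite) auto
  moreover have "(\<lambda>\<omega>. restrict (\<lambda>t. X t \<omega>) T) -` PiE T F \<inter> space M
      = {\<omega>\<in>space M. \<forall>t\<in>T. X t \<omega> \<in> F t}"
    by (auto simp: PiE_iff)
  ultimately show ?thesis by (metis measurable_sets)
qed

lemma emeasure_distr_restrict_PiE: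
  fixes X :: "'i \<Rightarrow> 'a \<Rightarrow> 'b::topological_space"
  assumes "finite T" "\<And>t. t \<in> T \<Longrightarrow> X t \<in> borel_measurable M"
    "\<And>t. t \<in> T \<Longrightarrow> F t \<in> sets borel"
  shows "emeasure (distr M (PiM T (\<lambda>_. borel)) (\<lambda>\<omega>. restrict (\<lambda>t. X t \<omega>) T)) (PiE T F)
      = emeasure M {\<omega>\<in>space M. \<forall>t\<in>T. X t \<omega> \<in> F t}"
proof -
  have "(\<lambda>\<omega>. restrict (\<lambda>t. X t \<omega>) T) \<in> measurable M (PiM T (\<lambda>_. borel))"
    using assms(2) by (rule measurable_restrict)
  moreover have "PiE T F \<in> sets (PiM T (\<lambda>_. borel))"
    using assms(1,3) by (intro sets_PiM_I_finite) auto
  moreover have "(\<lambda>\<omega>. restrict (\<lambda>t. X t \<omega>) T) -` PiE T F \<inter> space M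
      = {\<omega>\<in>space M. \<forall>t\<in>T. X t \<omega> \<in> F t}"
    by (auto simp: PiE_iff)
  ultimately show ?thesis by (simp add: emeasure_distr)
qed

lemma emeasure_Collect_restrict_eq_if_distr_eq:
  fixes X X' :: "'i \<Rightarrow> 'a \<Rightarrow> 'b::topological_space"
  assumes "finite T" "\<And>t. t \<in> T \<Longrightarrow> X t \<in> borel_measurable M"
    "\<And>t. t \<in> T \<Longrightarrow> X' t \<in> borel_measurable M" "\<And>t. t \<in> T \<Longrightarrow> F t \<in> sets borel"
    and "distr M (PiM T (\<lambda>_. borel)) (\<lambda>\<omega>. restrict (\<lambda>t. X t \<omega>) T)
       = distr M (PiM T (\<lambda>_. borel)) (\<lambda>\<omega>. restrict (\<lambda>t. X' t \<omega>) T)"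
  shows "emeasure M {\<omega>\<in>space M. \<forall>t\<in>T. X t \<omega> \<in> F t} = emeasure M {\<omega>\<in>space M. \<forall>t\<in>T. X' t \<omega> \<in> F t}"
proof -
  have "emeasure (distr M (PiM T (\<lambda>_. borel)) (\<lambda>\<omega>. restrict (\<lambda>t. X t \<omega>) T)) (PiE T F)
      = emeasure (distr M (PiM T (\<lambda>_. borel)) (\<lambda>\<omega>. restrict (\<lambda>t. X' t \<omega>) T)) (PiE T F)"
    using assms(5) by simp
  then show ?thesis
    by (simp add: emeasure_distr_restrict_PiE[OF assms(1,2,4)] emeasure_distr_restrict_PiE[OF assms(1,3,4)])
qed

lemma eq_law_emeasure:
  fixes X X' :: "'i \<Rightarrow> 'a \<Rightarrow> 'b::topological_space"
  assumes "\<And>i. X i \<in> borel_measurable M" "\<And>i. X' i \<in> borel_measurable M"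
    and "eq_law M X X'" and "A \<in> sets borel"
  shows "emeasure M {\<omega>\<in>space M. X t \<omega> \<in> A} = emeasure M {\<omega>\<in>space M. X' t \<omega> \<in> A}"
  using emeasure_Collect_restrict_eq_if_distr_eq[of "{t}" X M X' "\<lambda>_. A"] assms
  by (simp add: eq_law_def)

lemma mem_closed_if_infdist_le:
  assumes "closed F" "F \<noteq> {}" and le: "\<And>k::nat. infdist x F \<le> 2 * (1 / Suc k)"
  shows "x \<in> F"
proof -
  have "infdist x F = 0"
  proof (rule ccontr)
    assume "infdist x F \<noteq> 0"
    then have "0 < infdist x F / 2" using infdist_nonneg[of x F] by simp
    then obtain k where "inverse (real (Suc k)) < infdist x F / 2"
      using reals_Archimedean by blast
    with le[of k] show False by (simp add: inverse_eq_divide)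
  qed
  then show ?thesis using assms(1,2) in_closure_iff_infdist_zero closure_closed by blast
qed

context prob_space
begin

lemma prob_Collect_restrict_le_perturbed:
  fixes X Y :: "'i \<Rightarrow> 'a \<Rightarrow> 'b::{metric_space, second_countable_topology}"
  assumes T: "finite T"
    and [measurable]: "\<And>t. t \<in> T \<Longrightarrow> X t \<in> borel_measurable M" "\<And>t. t \<in> T \<Longrightarrow> Y t \<in> borel_measurable M"
    and AB: "\<And>t. t \<in> T \<Longrightarrow> A t \<in> sets borel" "\<And>t. t \<in> T \<Longrightarrow> B t \<in> sets borel"
    and near: "\<And>t x y. t \<in> T \<Longrightarrow> x \<in> A t \<Longrightarrow> dist x y \<le> d \<Longrightarrow> y \<in> B t"
  shows "prob {\<omega>\<in>space M. \<forall>t\<in>T. X t \<omega> \<in> A t}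
    \<le> prob {\<omega>\<in>space M. \<forall>t\<in>T. Y t \<omega> \<in> B t} + (\<Sum>t\<in>T. prob {\<omega>\<in>space M. d < dist (X t \<omega>) (Y t \<omega>)})"
proof -
  define far where "far t = {\<omega>\<in>space M. d < dist (X t \<omega>) (Y t \<omega>)}" for t
  have far[measurable]: "far t \<in> sets M" if "t \<in> T" for t
    using that unfolding far_def by measurable
  have Y_B: "{\<omega>\<in>space M. \<forall>t\<in>T. Y t \<omega> \<in> B t} \<in> sets M"
    using T AB(2) by (intro sets_Collect_restrict_PiE) auto
  have far_U: "(\<Union>t\<in>T. far t) \<in> sets M"
    using T far by (intro sets.finite_UN) auto
  have "{\<omega>\<in>space M. \<forall>t\<in>T. X t \<omega> \<in> A t} \<subseteq> {\<omega>\<in>space M. \<forall>t\<in>T. Y t \<omega> \<in> B t} \<union> (\<Union>t\<in>T. far t)"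
    using near by (force simp: far_def not_less)
  then have "prob {\<omega>\<in>space M. \<forall>t\<in>T. X t \<omega> \<in> A t}
      \<le> prob ({\<omega>\<in>space M. \<forall>t\<in>T. Y t \<omega> \<in> B t} \<union> (\<Union>t\<in>T. far t))"
    using Y_B far_U by (intro finite_measure_mono) auto
  also have "\<dots> \<le> prob {\<omega>\<in>space M. \<forall>t\<in>T. Y t \<omega> \<in> B t} + prob (\<Union>t\<in>T. far t)"
    using Y_B far_U by (intro measure_subadditive) (auto simp: emeasure_finite)
  also have "prob (\<Union>t\<in>T. far t) \<le> (\<Sum>t\<in>T. prob (far t))"
    using T by (intro finite_measure_subadditive_finite) auto
  finally show ?thesis by (simp add: far_def)
qed

lemma prob_Collect_restrict_le_dilated_limit:
  fixes Xs Xs' :: "nat \<Rightarrow> 'i \<Rightarrow> 'a \<Rightarrow> real^'n" and X X' :: "'i \<Rightarrow> 'a \<Rightarrow> real^'n"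
  assumes T: "finite T"
    and X: "\<And>t. t \<in> T \<Longrightarrow> conv_prob M (\<lambda>m. Xs m t) (X t)"
    and X': "\<And>t. t \<in> T \<Longrightarrow> conv_prob M (\<lambda>m. Xs' m t) (X' t)"
    and law: "\<And>m. distr M (PiM T (\<lambda>_. borel)) (\<lambda>\<omega>. restrict (\<lambda>t. Xs m t \<omega>) T)
                  = distr M (PiM T (\<lambda>_. borel)) (\<lambda>\<omega>. restrict (\<lambda>t. Xs' m t \<omega>) T)"
    and F: "\<And>t. t \<in> T \<Longrightarrow> F t \<in> sets borel" and "d > 0"
  shows "prob {\<omega>\<in>space M. \<forall>t\<in>T. X t \<omega> \<in> F t}
    \<le> prob {\<omega>\<in>space M. \<forall>t\<in>T. infdist (X' t \<omega>) (F t) \<le> 2 * d}"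
proof -
  have [measurable]: "X t \<in> borel_measurable M" "X' t \<in> borel_measurable M"
    "Xs m t \<in> borel_measurable M" "Xs' m t \<in> borel_measurable M" if "t \<in> T" for t m
    using conv_prob_measurable[OF X[OF that]] conv_prob_measurable[OF X'[OF that]] by auto
  have dilated: "{v. infdist v (F t) \<le> r} \<in> sets borel" for r t
    by (intro borel_closed closed_Collect_le continuous_intros)
  have near: "infdist y (F t) \<le> d" if "x \<in> F t" "dist x y \<le> d" for x y t
    using infdist_le[OF that(1), of y] that(2) by (simp add: dist_commute)
  have near2: "infdist y (F t) \<le> 2 * d" if "infdist x (F t) \<le> d" "dist x y \<le> d" for x y t
    using infdist_triangle[of y "F t" x] that by (simp add: dist_commute)
  define err where "err m = (\<Sum>t\<in>T. prob {\<omega>\<in>space M. d < dist (X t \<omega>) (Xs m t \<omega>)})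
      + (\<Sum>t\<in>T. prob {\<omega>\<in>space M. d < dist (Xs' m t \<omega>) (X' t \<omega>)})" for m
  have "err \<longlonglongrightarrow> (\<Sum>t\<in>T. 0) + (\<Sum>t\<in>T. 0)"
    unfolding err_def using X X' \<open>d > 0\<close>
    by (intro tendsto_add tendsto_sum) (simp_all add: conv_prob_def dist_commute)
  then have "(\<lambda>m. prob {\<omega>\<in>space M. \<forall>t\<in>T. X' t \<omega> \<in> {v. infdist v (F t) \<le> 2 * d}} + err m)
      \<longlonglongrightarrow> prob {\<omega>\<in>space M. \<forall>t\<in>T. X' t \<omega> \<in> {v. infdist v (F t) \<le> 2 * d}} + 0"
    by (intro tendsto_add tendsto_const) simp
  then have lim: "(\<lambda>m. prob {\<omega>\<in>space M. \<forall>t\<in>T. X' t \<omega> \<in> {v. infdist v (F t) \<le> 2 * d}} + err m)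
      \<longlonglongrightarrow> prob {\<omega>\<in>space M. \<forall>t\<in>T. X' t \<omega> \<in> {v. infdist v (F t) \<le> 2 * d}}"
    by (simp only: add_0_right)
  have bound: "prob {\<omega>\<in>space M. \<forall>t\<in>T. X t \<omega> \<in> F t}
      \<le> prob {\<omega>\<in>space M. \<forall>t\<in>T. X' t \<omega> \<in> {v. infdist v (F t) \<le> 2 * d}} + err m" for m
  proof -
    have "prob {\<omega>\<in>space M. \<forall>t\<in>T. X t \<omega> \<in> F t}
        \<le> prob {\<omega>\<in>space M. \<forall>t\<in>T. Xs m t \<omega> \<in> {v. infdist v (F t) \<le> d}}
          + (\<Sum>t\<in>T. prob {\<omega>\<in>space M. d < dist (X t \<omega>) (Xs m t \<omega>)})"
      using F dilated near by (intro prob_Collect_restrict_le_perturbed[OF T]) auto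
    also have "prob {\<omega>\<in>space M. \<forall>t\<in>T. Xs m t \<omega> \<in> {v. infdist v (F t) \<le> d}}
        = prob {\<omega>\<in>space M. \<forall>t\<in>T. Xs' m t \<omega> \<in> {v. infdist v (F t) \<le> d}}"
      unfolding measure_def using dilated
      by (subst emeasure_Collect_restrict_eq_if_distr_eq[OF T _ _ _ law]) auto
    also have "prob {\<omega>\<in>space M. \<forall>t\<in>T. Xs' m t \<omega> \<in> {v. infdist v (F t) \<le> d}}
        \<le> prob {\<omega>\<in>space M. \<forall>t\<in>T. X' t \<omega> \<in> {v. infdist v (F t) \<le> 2 * d}}
          + (\<Sum>t\<in>T. prob {\<omega>\<in>space M. d < dist (Xs' m t \<omega>) (X' t \<omega>)})"
      using dilated near2 by (intro prob_Collect_restrict_le_perturbed[OF T]) auto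
    finally show ?thesis by (simp add: err_def)
  qed
  have "prob {\<omega>\<in>space M. \<forall>t\<in>T. X t \<omega> \<in> F t}
      \<le> prob {\<omega>\<in>space M. \<forall>t\<in>T. X' t \<omega> \<in> {v. infdist v (F t) \<le> 2 * d}}"
    by (rule LIMSEQ_le_const[OF lim]) (use bound in blast)
  then show ?thesis by simp
qed

lemma prob_Collect_restrict_closed_le_limit:
  fixes Xs Xs' :: "nat \<Rightarrow> 'i \<Rightarrow> 'a \<Rightarrow> real^'n" and X X' :: "'i \<Rightarrow> 'a \<Rightarrow> real^'n"
  assumes T: "finite T"
    and X: "\<And>t. t \<in> T \<Longrightarrow> conv_prob M (\<lambda>m. Xs m t) (X t)"
    and X': "\<And>t. t \<in> T \<Longrightarrow> conv_prob M (\<lambda>m. Xs' m t) (X' t)"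
    and law: "\<And>m. distr M (PiM T (\<lambda>_. borel)) (\<lambda>\<omega>. restrict (\<lambda>t. Xs m t \<omega>) T)
                  = distr M (PiM T (\<lambda>_. borel)) (\<lambda>\<omega>. restrict (\<lambda>t. Xs' m t \<omega>) T)"
    and F: "\<And>t. t \<in> T \<Longrightarrow> closed (F t)"
  shows "prob {\<omega>\<in>space M. \<forall>t\<in>T. X t \<omega> \<in> F t} \<le> prob {\<omega>\<in>space M. \<forall>t\<in>T. X' t \<omega> \<in> F t}"
proof (cases "\<exists>t\<in>T. F t = {}")
  case True
  then have "{\<omega>\<in>space M. \<forall>t\<in>T. X t \<omega> \<in> F t} = {}" by auto
  then show ?thesis by (metis measure_empty measure_nonneg)
next
  case False
  have [measurable]: "X' t \<in> borel_measurable M" if "t \<in> T" for t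
    using conv_prob_measurable[OF X'[OF that]] by auto
  define D where "D k = {\<omega>\<in>space M. \<forall>t\<in>T. infdist (X' t \<omega>) (F t) \<le> 2 * (1 / Suc k)}" for k :: nat
  have D_sets: "D k \<in> sets M" for k
    using sets_Collect_restrict_PiE[OF T, of X' M "\<lambda>t. {v. infdist v (F t) \<le> 2 * (1 / Suc k)}"]
    by (simp add: D_def borel_closed closed_Collect_le continuous_intros)
  have "decseq D"
  proof (rule decseq_SucI)
    fix k
    have "2 * (1 / real (Suc (Suc k))) \<le> 2 * (1 / real (Suc k))" by (simp add: frac_le)
    then show "D (Suc k) \<subseteq> D k" unfolding D_def by (auto intro: order_trans)
  qed
  moreover have "(\<Inter>k. D k) = {\<omega>\<in>space M. \<forall>t\<in>T. X' t \<omega> \<in> F t}"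
  proof (intro equalityI subsetI)
    fix \<omega> assume \<omega>: "\<omega> \<in> (\<Inter>k. D k)"
    have "X' t \<omega> \<in> F t" if "t \<in> T" for t
      using \<omega> that False F[OF that] by (intro mem_closed_if_infdist_le) (auto simp: D_def)
    with \<omega> show "\<omega> \<in> {\<omega>\<in>space M. \<forall>t\<in>T. X' t \<omega> \<in> F t}" by (auto simp: D_def)
  qed (auto simp: D_def infdist_zero)
  ultimately have "(\<lambda>k. prob (D k)) \<longlonglongrightarrow> prob {\<omega>\<in>space M. \<forall>t\<in>T. X' t \<omega> \<in> F t}"
    using finite_Lim_measure_decseq[of D] D_sets by (auto simp: image_subset_iff)
  moreover have "prob {\<omega>\<in>space M. \<forall>t\<in>T. X t \<omega> \<in> F t} \<le> prob (D k)" for k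
    unfolding D_def using F
    by (intro prob_Collect_restrict_le_dilated_limit[OF T X X' law]) auto
  ultimately show ?thesis by (intro LIMSEQ_le_const) auto
qed

text \<open>Closed boxes form an
  intersection-stable generator of the Borel sets of \<open>(real^'n)^T\<close>, and on closed boxes the
  inequality above holds in both directions.\<close>

lemma distr_restrict_eq_if_conv_prob:
  fixes Xs Xs' :: "nat \<Rightarrow> 'i \<Rightarrow> 'a \<Rightarrow> real^'n" and X X' :: "'i \<Rightarrow> 'a \<Rightarrow> real^'n"
  assumes T: "finite T"
    and X: "\<And>t. t \<in> T \<Longrightarrow> conv_prob M (\<lambda>m. Xs m t) (X t)"
    and X': "\<And>t. t \<in> T \<Longrightarrow> conv_prob M (\<lambda>m. Xs' m t) (X' t)"
    and law: "\<And>m. distr M (PiM T (\<lambda>_. borel)) (\<lambda>\<omega>. restrict (\<lambda>t. Xs m t \<omega>) T)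
                  = distr M (PiM T (\<lambda>_. borel)) (\<lambda>\<omega>. restrict (\<lambda>t. Xs' m t \<omega>) T)"
  shows "distr M (PiM T (\<lambda>_. borel)) (\<lambda>\<omega>. restrict (\<lambda>t. X t \<omega>) T)
       = distr M (PiM T (\<lambda>_. borel)) (\<lambda>\<omega>. restrict (\<lambda>t. X' t \<omega>) T)"
proof -
  have meas: "X t \<in> borel_measurable M" "X' t \<in> borel_measurable M" if "t \<in> T" for t
    using conv_prob_measurable[OF X[OF that]] conv_prob_measurable[OF X'[OF that]] by auto
  define \<Omega> where "\<Omega> = PiE T (\<lambda>_::'i. UNIV :: (real^'n) set)"
  define P where "P = {{f \<in> \<Omega>. \<forall>i\<in>T. f i \<in> C i} | C. C \<in> Pi T (\<lambda>_. Collect closed)}"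
  have "sets (PiM T (\<lambda>_. sigma UNIV (Collect closed) :: (real^'n) measure))
      = sets (sigma \<Omega> {{f \<in> PiE T (\<lambda>_. UNIV). \<forall>i\<in>j. f i \<in> C i} | C j. j \<in> {T} \<and> C \<in> Pi j (\<lambda>_. Collect closed)})"
    unfolding \<Omega>_def by (rule sets_PiM_sigma[where J="{T}"]) (auto intro!: exI[of _ "{UNIV}"] simp: T)
  moreover have "{{f \<in> PiE T (\<lambda>_. UNIV). \<forall>i\<in>j. f i \<in> C i} | C j. j \<in> {T} \<and> C \<in> Pi j (\<lambda>_. Collect closed)} = P"
    unfolding P_def \<Omega>_def by auto
  moreover have P_Pow: "P \<subseteq> Pow \<Omega>" unfolding P_def by auto
  ultimately have sets_P: "sets (PiM T (\<lambda>_. borel :: (real^'n) measure)) = sigma_sets \<Omega> P"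
    by (simp add: borel_eq_closed[symmetric] sets_measure_of)
  have on_P: "emeasure (distr M (PiM T (\<lambda>_. borel)) (\<lambda>\<omega>. restrict (\<lambda>t. X t \<omega>) T)) S
      = emeasure (distr M (PiM T (\<lambda>_. borel)) (\<lambda>\<omega>. restrict (\<lambda>t. X' t \<omega>) T)) S" if "S \<in> P" for S
  proof -
    from that obtain C where C: "\<And>t. t \<in> T \<Longrightarrow> closed (C t)" and S: "S = {f \<in> \<Omega>. \<forall>i\<in>T. f i \<in> C i}"
      unfolding P_def by auto
    have S_PiE: "S = PiE T C" unfolding S \<Omega>_def by (auto simp: PiE_def Pi_def)
    have "prob {\<omega>\<in>space M. \<forall>t\<in>T. X t \<omega> \<in> C t} = prob {\<omega>\<in>space M. \<forall>t\<in>T. X' t \<omega> \<in> C t}"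
      using prob_Collect_restrict_closed_le_limit[OF T X X' law C]
        prob_Collect_restrict_closed_le_limit[OF T X' X law[symmetric] C]
      by (rule antisym)
    then have "emeasure M {\<omega>\<in>space M. \<forall>t\<in>T. X t \<omega> \<in> C t}
        = emeasure M {\<omega>\<in>space M. \<forall>t\<in>T. X' t \<omega> \<in> C t}"
      by (simp add: emeasure_eq_measure)
    then show ?thesis
      using C by (simp add: S_PiE emeasure_distr_restrict_PiE[OF T] meas)
  qed
  show ?thesis
  proof (rule measure_eqI_generator_eq[OF _ P_Pow on_P, where A="\<lambda>_. \<Omega>"])
    show "Int_stable P"
      unfolding Int_stable_def P_def
    proof safe
      fix C D :: "'i \<Rightarrow> (real^'n) set"
      assume "C \<in> Pi T (\<lambda>_. Collect closed)" "D \<in> Pi T (\<lambda>_. Collect closed)"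
      then show "\<exists>E. {f \<in> \<Omega>. \<forall>i\<in>T. f i \<in> C i} \<inter> {f \<in> \<Omega>. \<forall>i\<in>T. f i \<in> D i}
          = {f \<in> \<Omega>. \<forall>i\<in>T. f i \<in> E i} \<and> E \<in> Pi T (\<lambda>_. Collect closed)"
        by (intro exI[of _ "\<lambda>i. C i \<inter> D i"]) auto
    qed
    have "\<Omega> \<in> P" unfolding P_def by (auto intro!: exI[of _ "\<lambda>_. UNIV"])
    then show "range (\<lambda>_. \<Omega>) \<subseteq> P" by auto
    have "prob_space (distr M (PiM T (\<lambda>_. borel)) (\<lambda>\<omega>. restrict (\<lambda>t. X t \<omega>) T))"
      by (intro prob_space_distr measurable_restrict meas)
    then show "emeasure (distr M (PiM T (\<lambda>_. borel)) (\<lambda>\<omega>. restrict (\<lambda>t. X t \<omega>) T)) \<Omega> \<noteq> \<infinity>"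
      by (simp add: prob_space.finite_measure finite_measure.emeasure_finite)
  qed (simp_all add: sets_P)
qed

end

section \<open>Boxes and rectangular increments\<close>

definition int_box :: "(int, 'N::finite) vec \<Rightarrow> (int, 'N) vec \<Rightarrow> (int, 'N) vec set" where
  "int_box a b = {j. \<forall>l. a $ l \<le> j $ l \<and> j $ l \<le> b $ l}"

definition box_corner :: "(int, 'N::finite) vec \<Rightarrow> (int, 'N) vec \<Rightarrow> 'N set \<Rightarrow> (int, 'N) vec" where
  "box_corner a b S = (\<chi> l. if l \<in> S then a $ l - 1 else b $ l)"

lemma in_int_boxI: "(\<And>l. a $ l \<le> j $ l \<and> j $ l \<le> b $ l) \<Longrightarrow> j \<in> int_box a b"
  by (simp add: int_box_def)

lemma in_int_boxD: "j \<in> int_box a b \<Longrightarrow> a $ l \<le> j $ l \<and> j $ l \<le> b $ l"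
  by (simp add: int_box_def)

lemma finite_int_box: "finite (int_box a (b :: (int, 'N::finite) vec))"
proof -
  have "int_box a b \<subseteq> vec_lambda ` PiE UNIV (\<lambda>l. {a $ l..b $ l})"
  proof
    fix j assume "j \<in> int_box a b"
    then have "vec_nth j \<in> PiE UNIV (\<lambda>l. {a $ l..b $ l})" by (auto simp: int_box_def)
    then show "j \<in> vec_lambda ` PiE UNIV (\<lambda>l. {a $ l..b $ l})" by (metis image_eqI vec_nth_inverse)
  qed
  moreover have "finite (PiE (UNIV::'N set) (\<lambda>l. {a $ l..b $ l}))" by (intro finite_PiE) auto
  ultimately show ?thesis by (metis finite_imageI finite_subset)
qed

lemma int_box_eq_empty:
  assumes "b $ l + 1 < a $ l"
  shows "int_box a b = {}"
proof (rule equals0I)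
  fix j assume "j \<in> int_box a b"
  from in_int_boxD[OF this, of l] assms show False by linarith
qed

lemma int_box_translate: "int_box (a + s) (b + s) = (\<lambda>j. j + s) ` int_box a b"
proof (rule set_eqI)
  fix x
  have "x \<in> int_box (a + s) (b + s) \<longleftrightarrow> x - s \<in> int_box a b"
    by (auto simp: int_box_def algebra_simps)
  then show "x \<in> int_box (a + s) (b + s) \<longleftrightarrow> x \<in> (\<lambda>j. j + s) ` int_box a b"
    by (metis (no_types, lifting) add_diff_cancel diff_add_cancel image_iff)
qed

lemma box_sum_eq_sum_int_box:
  "box_sum \<Theta> G t a \<omega> = (\<Sum>j\<in>int_box a t. mat_exp (tstar j \<Theta>) *v delta G j \<omega>)"
  by (simp add: box_sum_def int_box_def)

lemma ind_vec_nth: "ind_vec S $ l = (if l \<in> S then 1 else 0)"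
  by (simp add: ind_vec_def)

lemma prod_of_bool_eq: "finite A \<Longrightarrow> (\<Prod>l\<in>A. (of_bool (P l) :: 'a::comm_semiring_1)) = of_bool (\<forall>l\<in>A. P l)"
  by (induct A rule: finite_induct) auto

text \<open>Expanding \<open>\<Prod>\<^sub>l (f l False - f l True)\<close> over the subsets of the coordinates: every
  identity for alternating sums over the \<open>2\<^sup>N\<close> vertices of a unit cube below reduces to a
  one-dimensional identity through this.\<close>

lemma sum_Pow_alternating_prod:
  fixes f :: "'N::finite \<Rightarrow> bool \<Rightarrow> 'a::comm_ring_1"
  shows "(\<Sum>S\<in>Pow UNIV. (-1) ^ card S * (\<Prod>l\<in>UNIV. f l (l \<in> S)))
       = (\<Prod>l\<in>UNIV. f l False - f l True)"
proof -
  have "(\<Prod>l\<in>UNIV. f l False - f l True) = (\<Prod>l\<in>UNIV. - f l True + f l False)" by simp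
  also have "\<dots> = (\<Sum>S\<in>Pow UNIV. (\<Prod>l\<in>S. - f l True) * (\<Prod>l\<in>UNIV - S. f l False))"
    by (rule prod_add) simp
  also have "\<dots> = (\<Sum>S\<in>Pow UNIV. (-1) ^ card S * (\<Prod>l\<in>UNIV. f l (l \<in> S)))"
  proof (rule sum.cong[OF refl])
    fix S :: "'N set"
    have "(\<Prod>l\<in>UNIV. f l (l \<in> S)) = (\<Prod>l\<in>UNIV - S. f l (l \<in> S)) * (\<Prod>l\<in>S. f l (l \<in> S))"
      by (rule prod.subset_diff) simp_all
    also have "\<dots> = (\<Prod>l\<in>UNIV - S. f l False) * (\<Prod>l\<in>S. f l True)"
      by (intro arg_cong2[where f="(*)"] prod.cong) auto
    finally show "(\<Prod>l\<in>S. - f l True) * (\<Prod>l\<in>UNIV - S. f l False)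
        = (-1) ^ card S * (\<Prod>l\<in>UNIV. f l (l \<in> S))"
      by (simp add: prod_uminus)
  qed
  finally show ?thesis by simp
qed

lemma sum_Pow_alternating_prod_scaleR:
  fixes W :: "'i \<Rightarrow> 'v::real_vector" and f :: "'i \<Rightarrow> 'N::finite \<Rightarrow> bool \<Rightarrow> real"
  shows "(\<Sum>S\<in>Pow UNIV. (-1) ^ card S *\<^sub>R (\<Sum>i\<in>B. (\<Prod>l\<in>UNIV. f i l (l \<in> S)) *\<^sub>R W i))
       = (\<Sum>i\<in>B. (\<Prod>l\<in>UNIV. f i l False - f i l True) *\<^sub>R W i)"
proof -
  have "(\<Sum>S\<in>Pow UNIV. (-1) ^ card S *\<^sub>R (\<Sum>i\<in>B. (\<Prod>l\<in>UNIV. f i l (l \<in> S)) *\<^sub>R W i))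
      = (\<Sum>i\<in>B. (\<Sum>S\<in>Pow UNIV. (-1) ^ card S * (\<Prod>l\<in>UNIV. f i l (l \<in> S))) *\<^sub>R W i)"
    by (simp del: Pow_UNIV add: scaleR_sum_right scaleR_sum_left sum.swap[of _ "Pow UNIV" B])
  then show ?thesis by (simp only: sum_Pow_alternating_prod)
qed

lemma sum_subset_eq_sum_of_bool_scaleR:
  assumes "finite B" "C \<subseteq> B"
  shows "(\<Sum>i\<in>C. (W i :: 'v::real_vector)) = (\<Sum>i\<in>B. of_bool (i \<in> C) *\<^sub>R W i)"
proof -
  have "(\<Sum>i\<in>B. of_bool (i \<in> C) *\<^sub>R W i) = (\<Sum>i\<in>B. if i \<in> C then W i else 0)"
    by (intro sum.cong) auto
  also have "\<dots> = sum W (B \<inter> C)" by (simp add: sum.inter_restrict[OF assms(1)])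
  finally show ?thesis using assms(2) by (simp add: Int_absorb1)
qed

lemma sum_of_bool_eq_scaleR:
  assumes "finite B" "c \<in> B"
  shows "(\<Sum>i\<in>B. of_bool (i = c) *\<^sub>R (W i :: 'v::real_vector)) = W c"
proof -
  have "(\<Sum>i\<in>B. of_bool (i = c) *\<^sub>R W i) = (\<Sum>i\<in>B. if i = c then W i else 0)"
    by (intro sum.cong) auto
  with assms show ?thesis by (simp add: sum.delta')
qed

text \<open>Summation by parts in every coordinate: the increments over the box \<open>[a, b]\<close> sum up to
  the alternating sum of the values at the corners of \<open>[a - 1, b]\<close>.\<close>

lemma sum_delta_int_box:
  fixes Z :: "(int, 'N::finite) vec \<Rightarrow> 'w \<Rightarrow> real^'n"
  assumes ab: "\<forall>l. a $ l \<le> b $ l + 1"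
  shows "(\<Sum>j\<in>int_box a b. delta Z j \<omega>) = (\<Sum>S\<in>Pow UNIV. (-1) ^ card S *\<^sub>R Z (box_corner a b S) \<omega>)"
proof -
  define B where "B = int_box (\<chi> l. a $ l - 1) b"
  have B: "finite B" by (simp add: B_def finite_int_box)
  define f where "f i l \<beta> = (of_bool (a $ l \<le> i $ l + (if \<beta> then 1 else 0) \<and> i $ l + (if \<beta> then 1 else 0) \<le> b $ l) :: real)" for i l \<beta>
  define g where "g i l \<beta> = (of_bool (i $ l = (if \<beta> then a $ l - 1 else b $ l)) :: real)" for i l \<beta>
  have shifted: "(\<Sum>j\<in>int_box a b. Z (j - ind_vec S) \<omega>) = (\<Sum>i\<in>B. (\<Prod>l\<in>UNIV. f i l (l \<in> S)) *\<^sub>R Z i \<omega>)"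
    for S
  proof -
    have "(\<Sum>j\<in>int_box a b. Z (j - ind_vec S) \<omega>) = (\<Sum>i\<in>(\<lambda>j. j - ind_vec S) ` int_box a b. Z i \<omega>)"
      by (simp add: sum.reindex inj_on_def)
    also have "\<dots> = (\<Sum>i\<in>B. of_bool (i \<in> (\<lambda>j. j - ind_vec S) ` int_box a b) *\<^sub>R Z i \<omega>)"
    proof (rule sum_subset_eq_sum_of_bool_scaleR[OF B], safe)
      fix j assume j: "j \<in> int_box a b"
      show "j - ind_vec S \<in> B"
        unfolding B_def
      proof (rule in_int_boxI)
        fix l
        from in_int_boxD[OF j, of l]
        show "(\<chi> l. a $ l - 1) $ l \<le> (j - ind_vec S) $ l \<and> (j - ind_vec S) $ l \<le> b $ l"
          by (simp add: ind_vec_nth)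
      qed
    qed
    also have "\<dots> = (\<Sum>i\<in>B. (\<Prod>l\<in>UNIV. f i l (l \<in> S)) *\<^sub>R Z i \<omega>)"
    proof (rule sum.cong[OF refl])
      fix i
      have "i \<in> (\<lambda>j. j - ind_vec S) ` int_box a b \<longleftrightarrow> i + ind_vec S \<in> int_box a b"
        by (auto simp: image_iff) (metis add_diff_cancel)
      then show "of_bool (i \<in> (\<lambda>j. j - ind_vec S) ` int_box a b) *\<^sub>R Z i \<omega>
          = (\<Prod>l\<in>UNIV. f i l (l \<in> S)) *\<^sub>R Z i \<omega>"
        by (simp add: f_def prod_of_bool_eq int_box_def ind_vec_nth)
    qed
    finally show ?thesis .
  qed
  have corners: "(\<Sum>i\<in>B. (\<Prod>l\<in>UNIV. g i l (l \<in> S)) *\<^sub>R Z i \<omega>) = Z (box_corner a b S) \<omega>" for S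
  proof -
    have "box_corner a b S \<in> B"
      unfolding B_def
    proof (rule in_int_boxI)
      fix l
      from ab[rule_format, of l]
      show "(\<chi> l. a $ l - 1) $ l \<le> box_corner a b S $ l \<and> box_corner a b S $ l \<le> b $ l"
        by (simp add: box_corner_def)
    qed
    moreover have "(\<Prod>l\<in>UNIV. g i l (l \<in> S)) = of_bool (i = box_corner a b S)" for i
      by (simp add: g_def prod_of_bool_eq box_corner_def vec_eq_iff)
    ultimately show ?thesis by (simp add: sum_of_bool_eq_scaleR[OF B])
  qed
  have diff: "f i l False - f i l True = g i l False - g i l True" for i l
    using ab[rule_format, of l] unfolding f_def g_def by (auto simp: of_bool_def)
  have "(\<Sum>j\<in>int_box a b. delta Z j \<omega>)
      = (\<Sum>S\<in>Pow UNIV. (-1) ^ card S *\<^sub>R (\<Sum>j\<in>int_box a b. Z (j - ind_vec S) \<omega>))"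
    unfolding delta_def by (simp add: scaleR_sum_right sum.swap[of _ "int_box a b"])
  also have "\<dots> = (\<Sum>S\<in>Pow UNIV. (-1) ^ card S *\<^sub>R (\<Sum>i\<in>B. (\<Prod>l\<in>UNIV. f i l (l \<in> S)) *\<^sub>R Z i \<omega>))"
    by (simp only: shifted)
  also have "\<dots> = (\<Sum>S\<in>Pow UNIV. (-1) ^ card S *\<^sub>R (\<Sum>i\<in>B. (\<Prod>l\<in>UNIV. g i l (l \<in> S)) *\<^sub>R Z i \<omega>))"
    by (simp only: sum_Pow_alternating_prod_scaleR[where f=f] sum_Pow_alternating_prod_scaleR[where f=g] diff)
  also have "\<dots> = (\<Sum>S\<in>Pow UNIV. (-1) ^ card S *\<^sub>R Z (box_corner a b S) \<omega>)"
    by (simp only: corners)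
  finally show ?thesis .
qed

text \<open>The one-dimensional kernel of \<open>M_op\<close>: summing \<open>x\<^sub>k\<close> against it gives \<open>x\<^sub>1 + \<dots> + x\<^sub>c\<close>
  for \<open>c \<ge> 0\<close> and \<open>-(x\<^sub>c\<^sub>+\<^sub>1 + \<dots> + x\<^sub>0)\<close> for \<open>c < 0\<close>, the convention under which the partial sums
  have increment \<open>x\<^sub>c\<close> at every \<open>c \<in> \<int>\<close>.\<close>

definition signed_range :: "int \<Rightarrow> int \<Rightarrow> real" where
  "signed_range c k = (if 0 \<le> c then of_bool (1 \<le> k \<and> k \<le> c) else - of_bool (c + 1 \<le> k \<and> k \<le> 0))"

lemma signed_range_diff: "signed_range c k - signed_range (c - 1) k = of_bool (k = c)"
  unfolding signed_range_def by (auto simp: of_bool_def)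

lemma signed_sum_M_range:
  fixes W :: "(int, 'N::finite) vec \<Rightarrow> real^'n"
  assumes "finite B" "M_range u \<subseteq> B"
  shows "(-1) ^ card {l. u $ l < 0} *\<^sub>R (\<Sum>j\<in>M_range u. W j)
       = (\<Sum>i\<in>B. (\<Prod>l\<in>UNIV. signed_range (u $ l) (i $ l)) *\<^sub>R W i)"
proof -
  have "(\<Prod>l\<in>UNIV. signed_range (u $ l) (i $ l))
      = (\<Prod>l\<in>UNIV. (if u $ l < 0 then -1 else 1) *
          of_bool ((0 \<le> u $ l \<longrightarrow> 1 \<le> i $ l \<and> i $ l \<le> u $ l) \<and> (u $ l < 0 \<longrightarrow> u $ l + 1 \<le> i $ l \<and> i $ l \<le> 0)))"
    for i by (intro prod.cong) (auto simp: signed_range_def)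
  also have "\<dots> i = (-1) ^ card {l. u $ l < 0} * of_bool (i \<in> M_range u)" for i
    by (simp add: prod.distrib prod.If_cases prod_of_bool_eq M_range_def)
  finally show ?thesis
    unfolding sum_subset_eq_sum_of_bool_scaleR[OF assms] by (simp add: scaleR_sum_right)
qed

lemma delta_signed_sum_M_range:
  fixes W :: "(int, 'N::finite) vec \<Rightarrow> real^'n"
  shows "(\<Sum>S\<in>Pow UNIV. (-1) ^ card S *\<^sub>R ((-1) ^ card {l. (t - ind_vec S) $ l < 0}
           *\<^sub>R (\<Sum>j\<in>M_range (t - ind_vec S). W j))) = W t"
proof -
  define B where "B = int_box (\<chi> l. - \<bar>t $ l\<bar> - 1) (\<chi> l. \<bar>t $ l\<bar> + 1)"
  have B: "finite B" by (simp add: B_def finite_int_box)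
  have sub: "M_range (t - ind_vec S) \<subseteq> B" for S
  proof
    fix j assume "j \<in> M_range (t - ind_vec S)"
    then have range: "(0 \<le> t $ l - ind_vec S $ l \<longrightarrow> 1 \<le> j $ l \<and> j $ l \<le> t $ l - ind_vec S $ l)
        \<and> (t $ l - ind_vec S $ l < 0 \<longrightarrow> t $ l - ind_vec S $ l + 1 \<le> j $ l \<and> j $ l \<le> 0)" for l
      by (simp add: M_range_def)
    then show "j \<in> B"
      unfolding B_def
    proof (intro in_int_boxI)
      fix l
      from range[of l]
      show "(\<chi> l. - \<bar>t $ l\<bar> - 1) $ l \<le> j $ l \<and> j $ l \<le> (\<chi> l. \<bar>t $ l\<bar> + 1) $ l"
        by (auto simp: ind_vec_nth abs_if split: if_splits)
    qed
  qed
  have "(-1) ^ card {l. (t - ind_vec S) $ l < 0} *\<^sub>R (\<Sum>j\<in>M_range (t - ind_vec S). W j)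
      = (\<Sum>i\<in>B. (\<Prod>l\<in>UNIV. signed_range (t $ l - (if l \<in> S then 1 else 0)) (i $ l)) *\<^sub>R W i)" for S
    unfolding signed_sum_M_range[OF B sub] by (simp add: ind_vec_nth)
  then have "(\<Sum>S\<in>Pow UNIV. (-1) ^ card S *\<^sub>R ((-1) ^ card {l. (t - ind_vec S) $ l < 0}
           *\<^sub>R (\<Sum>j\<in>M_range (t - ind_vec S). W j)))
      = (\<Sum>S\<in>Pow UNIV. (-1) ^ card S *\<^sub>R
           (\<Sum>i\<in>B. (\<Prod>l\<in>UNIV. signed_range (t $ l - (if l \<in> S then 1 else 0)) (i $ l)) *\<^sub>R W i))"
    by (simp only:)
  also have "\<dots> = (\<Sum>i\<in>B. of_bool (i = t) *\<^sub>R W i)"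
    by (simp del: Pow_UNIV add: sum_Pow_alternating_prod_scaleR[where
          f="\<lambda>i l \<beta>. signed_range (t $ l - (if \<beta> then 1 else 0)) (i $ l)"]
          signed_range_diff prod_of_bool_eq vec_eq_iff)
  also have "\<dots> = W t"
    by (rule sum_of_bool_eq_scaleR[OF B]) (auto simp: B_def int_box_def)
  finally show ?thesis .
qed

lemma delta_sum_int_box:
  fixes V :: "(int, 'N::finite) vec \<Rightarrow> real^'n"
  shows "(\<Sum>S\<in>Pow UNIV. (-1) ^ card S *\<^sub>R (\<Sum>i\<in>int_box a (j - ind_vec S). V i))
       = of_bool (\<forall>l. a $ l \<le> j $ l) *\<^sub>R V j"
proof -
  define B where "B = int_box a j"
  have B: "finite B" by (simp add: B_def finite_int_box)
  define f where "f i l \<beta> = (of_bool (a $ l \<le> i $ l \<and> i $ l \<le> j $ l - (if \<beta> then 1 else 0)) :: real)"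
    for i l \<beta>
  have sub: "int_box a (j - ind_vec S) \<subseteq> B" for S
  proof
    fix i assume i: "i \<in> int_box a (j - ind_vec S)"
    show "i \<in> B"
      unfolding B_def
    proof (rule in_int_boxI)
      fix l
      from in_int_boxD[OF i, of l] show "a $ l \<le> i $ l \<and> i $ l \<le> j $ l"
        by (simp add: ind_vec_nth split: if_splits)
    qed
  qed
  have "(\<Sum>i\<in>int_box a (j - ind_vec S). V i) = (\<Sum>i\<in>B. (\<Prod>l\<in>UNIV. f i l (l \<in> S)) *\<^sub>R V i)" for S
    unfolding sum_subset_eq_sum_of_bool_scaleR[OF B sub]
    by (intro sum.cong refl) (simp add: f_def prod_of_bool_eq int_box_def ind_vec_nth)
  then have "(\<Sum>S\<in>Pow UNIV. (-1) ^ card S *\<^sub>R (\<Sum>i\<in>int_box a (j - ind_vec S). V i))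
      = (\<Sum>S\<in>Pow UNIV. (-1) ^ card S *\<^sub>R (\<Sum>i\<in>B. (\<Prod>l\<in>UNIV. f i l (l \<in> S)) *\<^sub>R V i))"
    by (simp only:)
  also have "\<dots> = (\<Sum>i\<in>B. of_bool (\<forall>l. a $ l \<le> i $ l \<and> i $ l = j $ l) *\<^sub>R V i)"
  proof -
    have "f i l False - f i l True = of_bool (a $ l \<le> i $ l \<and> i $ l = j $ l)" for i l
      unfolding f_def by (auto simp: of_bool_def)
    then show ?thesis
      by (simp only: sum_Pow_alternating_prod_scaleR[where f=f] prod_of_bool_eq[OF finite] ball_UNIV)
  qed
  also have "\<dots> = of_bool (\<forall>l. a $ l \<le> j $ l) *\<^sub>R V j"
  proof (cases "\<forall>l. a $ l \<le> j $ l")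
    case True
    then have "j \<in> B" unfolding B_def by (intro in_int_boxI) simp
    moreover have "(\<forall>l. a $ l \<le> i $ l \<and> i $ l = j $ l) \<longleftrightarrow> i = j" for i
      using True by (auto simp: vec_eq_iff)
    ultimately show ?thesis using True by (simp add: sum_of_bool_eq_scaleR[OF B])
  next
    case False
    then obtain l where "\<not> a $ l \<le> j $ l" by blast
    then have "\<not> (\<forall>l. a $ l \<le> i $ l \<and> i $ l = j $ l)" for i by metis
    then have "(\<Sum>i\<in>B. of_bool (\<forall>l. a $ l \<le> i $ l \<and> i $ l = j $ l) *\<^sub>R V i) = (\<Sum>i\<in>B. 0)"
      by (intro sum.cong refl) (simp only: of_bool_eq(1) scaleR_zero_left)
    with False show ?thesis by simp
  qed
  finally show ?thesis .
qed

section \<open>Iterated limits in probability\<close>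

lemma vupd_nth: "vupd a l c $ k = (if k = l then c else a $ k)"
  by (simp add: vupd_def)

lemma set_coords: "set (coords :: 'N::{finite,linorder} list) = UNIV"
  by (simp add: coords_def)

lemma coords_not_Nil: "(coords :: 'N::{finite,linorder} list) \<noteq> []"
  using set_coords[where 'N='N] by auto

lemma distinct_coords: "distinct (coords :: 'N::{finite,linorder} list)"
  by (simp add: coords_def)

context prob_space
begin

lemma iter_lim_measurable: "iter_lim M ls F a X \<Longrightarrow> ls \<noteq> [] \<Longrightarrow> X \<in> borel_measurable M"
  by (cases ls) (auto dest: conv_prob_measurable)

lemma iter_lim_unique_AE:
  "iter_lim M ls F a X \<Longrightarrow> iter_lim M ls F a X' \<Longrightarrow> AE \<omega> in M. X \<omega> = X' \<omega>"
proof (induct ls arbitrary: a X X')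
  case (Cons l ls)
  then obtain Xs Xs' where
      X: "\<And>m. iter_lim M ls F (vupd a l (- int m)) (Xs m)" "conv_prob M Xs X"
    and X': "\<And>m. iter_lim M ls F (vupd a l (- int m)) (Xs' m)" "conv_prob M Xs' X'"
    by auto
  have "conv_prob M Xs' X"
    using Cons.hyps[OF X'(1) X(1)] conv_prob_measurable[OF X'(2)] conv_prob_measurable[OF X(2)]
    by (intro conv_prob_cong_AE[OF X(2)]) auto
  from conv_prob_unique_AE[OF this X'(2)] show ?case .
qed simp

lemma iter_lim_sum:
  assumes "finite I"
  shows "(\<forall>i\<in>I. iter_lim M ls (F i) a (X i))
    \<Longrightarrow> iter_lim M ls (\<lambda>a \<omega>. \<Sum>i\<in>I. F i a \<omega>) a (\<lambda>\<omega>. \<Sum>i\<in>I. X i \<omega>)"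
proof (induct ls arbitrary: a X)
  case (Cons l ls)
  then have "\<forall>i\<in>I. \<exists>Xs. (\<forall>m. iter_lim M ls (F i) (vupd a l (- int m)) (Xs m)) \<and> conv_prob M Xs (X i)"
    by simp
  then obtain Xs where Xs: "\<And>i. i \<in> I \<Longrightarrow>
      (\<forall>m. iter_lim M ls (F i) (vupd a l (- int m)) (Xs i m)) \<and> conv_prob M (Xs i) (X i)"
    by metis
  show ?case
    unfolding iter_lim.simps
  proof (intro exI conjI allI)
    show "iter_lim M ls (\<lambda>a \<omega>. \<Sum>i\<in>I. F i a \<omega>) (vupd a l (- int m)) (\<lambda>\<omega>. \<Sum>i\<in>I. Xs i m \<omega>)" for m
      using Xs by (intro Cons.hyps) auto
    show "conv_prob M (\<lambda>m \<omega>. \<Sum>i\<in>I. Xs i m \<omega>) (\<lambda>\<omega>. \<Sum>i\<in>I. X i \<omega>)"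
      using Xs by (intro conv_prob_sum[OF assms]) auto
  qed
qed (simp add: fun_eq_iff)

lemma iter_lim_bounded_linear:
  assumes "bounded_linear f"
  shows "iter_lim M ls F a X \<Longrightarrow> iter_lim M ls (\<lambda>a \<omega>. f (F a \<omega>)) a (\<lambda>\<omega>. f (X \<omega>))"
proof (induct ls arbitrary: a X)
  case (Cons l ls)
  then obtain Xs where "\<And>m. iter_lim M ls F (vupd a l (- int m)) (Xs m)" "conv_prob M Xs X"
    by auto
  then show ?case
    unfolding iter_lim.simps
    by (intro exI[of _ "\<lambda>m \<omega>. f (Xs m \<omega>)"] conjI allI Cons.hyps conv_prob_bounded_linear[OF assms])
qed simp

lemma iter_lim_base_cong:
  "iter_lim M ls F a X \<Longrightarrow> (\<forall>l. l \<notin> set ls \<longrightarrow> a $ l = b $ l) \<Longrightarrow> iter_lim M ls F b X"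
proof (induct ls arbitrary: a b X)
  case Nil
  then have "a = b" by (simp add: vec_eq_iff)
  with Nil show ?case by simp
next
  case (Cons l ls)
  then obtain Xs where Xs: "\<And>m. iter_lim M ls F (vupd a l (- int m)) (Xs m)" "conv_prob M Xs X"
    by auto
  have "iter_lim M ls F (vupd b l (- int m)) (Xs m)" for m
    by (rule Cons.hyps[OF Xs(1)]) (use Cons.prems in \<open>auto simp: vupd_nth\<close>)
  with Xs(2) show ?case by auto
qed

text \<open>Shifting the base point by \<open>s \<le> 0\<close> only drops finitely many terms of each limit.\<close>

lemma iter_lim_translate:
  "iter_lim M ls F (a + s) X \<Longrightarrow> (\<forall>l\<in>set ls. s $ l \<le> 0) \<Longrightarrow> iter_lim M ls (\<lambda>b. F (b + s)) a X"
proof (induct ls arbitrary: a X)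
  case (Cons l ls)
  then obtain Xs where Xs: "\<And>m. iter_lim M ls F (vupd (a + s) l (- int m)) (Xs m)" "conv_prob M Xs X"
    by auto
  define k where "k = nat (- s $ l)"
  have "vupd a l (- int m) + s = vupd (a + s) l (- int (m + k))" for m
    using Cons.prems by (auto simp: vec_eq_iff vupd_nth k_def)
  then have "iter_lim M ls (\<lambda>b. F (b + s)) (vupd a l (- int m)) (Xs (m + k))" for m
    using Xs(1)[of "m + k"] Cons.prems by (intro Cons.hyps) auto
  then show ?case
    unfolding iter_lim.simps by (intro exI[of _ "\<lambda>m. Xs (m + k)"] conjI allI conv_prob_shift[OF Xs(2)])
qed simp

lemma iter_lim_distr_eq:
  fixes F F' :: "'t \<Rightarrow> (int, 'N::finite) vec \<Rightarrow> 'a \<Rightarrow> real^'n"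
  assumes T: "finite T"
    and law: "\<And>a. distr M (PiM T (\<lambda>_. borel)) (\<lambda>\<omega>. restrict (\<lambda>t. F t a \<omega>) T)
                  = distr M (PiM T (\<lambda>_. borel)) (\<lambda>\<omega>. restrict (\<lambda>t. F' t a \<omega>) T)"
  shows "(\<forall>t\<in>T. iter_lim M ls (F t) a (X t)) \<Longrightarrow> (\<forall>t\<in>T. iter_lim M ls (F' t) a (X' t)) \<Longrightarrow>
     distr M (PiM T (\<lambda>_. borel)) (\<lambda>\<omega>. restrict (\<lambda>t. X t \<omega>) T)
   = distr M (PiM T (\<lambda>_. borel)) (\<lambda>\<omega>. restrict (\<lambda>t. X' t \<omega>) T)"
proof (induct ls arbitrary: a X X')
  case Nil
  then have "(\<lambda>\<omega>. restrict (\<lambda>t. X t \<omega>) T) = (\<lambda>\<omega>. restrict (\<lambda>t. F t a \<omega>) T)"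
    "(\<lambda>\<omega>. restrict (\<lambda>t. X' t \<omega>) T) = (\<lambda>\<omega>. restrict (\<lambda>t. F' t a \<omega>) T)"
    by (auto simp: restrict_def fun_eq_iff)
  then show ?case by (simp only: law)
next
  case (Cons l ls)
  from Cons.prems(1) obtain Xs where Xs: "\<And>t. t \<in> T \<Longrightarrow>
      (\<forall>m. iter_lim M ls (F t) (vupd a l (- int m)) (Xs t m)) \<and> conv_prob M (Xs t) (X t)"
    by simp metis
  from Cons.prems(2) obtain Xs' where Xs': "\<And>t. t \<in> T \<Longrightarrow>
      (\<forall>m. iter_lim M ls (F' t) (vupd a l (- int m)) (Xs' t m)) \<and> conv_prob M (Xs' t) (X' t)"
    by simp metis
  show ?case
  proof (rule distr_restrict_eq_if_conv_prob[OF T, of "\<lambda>m t. Xs t m" X "\<lambda>m t. Xs' t m" X'])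
    show "conv_prob M (\<lambda>m. Xs t m) (X t)" "conv_prob M (\<lambda>m. Xs' t m) (X' t)" if "t \<in> T" for t
      using Xs[OF that] Xs'[OF that] by simp_all
    show "distr M (PiM T (\<lambda>_. borel)) (\<lambda>\<omega>. restrict (\<lambda>t. Xs t m \<omega>) T)
        = distr M (PiM T (\<lambda>_. borel)) (\<lambda>\<omega>. restrict (\<lambda>t. Xs' t m \<omega>) T)" for m
      using Xs Xs' by (intro Cons.hyps) auto
  qed
qed

lemma iter_lim_indicator_AE:
  assumes [measurable]: "V \<in> borel_measurable M"
  shows "iter_lim M ls (\<lambda>a \<omega>. of_bool (\<forall>l. a $ l \<le> j $ l) *\<^sub>R V \<omega>) a X
    \<Longrightarrow> AE \<omega> in M. X \<omega> = of_bool (\<forall>l. l \<notin> set ls \<longrightarrow> a $ l \<le> j $ l) *\<^sub>R V \<omega>"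
proof (induct ls arbitrary: a X)
  case (Cons l ls)
  then obtain Xs where
    Xs: "\<And>m. iter_lim M ls (\<lambda>a \<omega>. of_bool (\<forall>l. a $ l \<le> j $ l) *\<^sub>R V \<omega>) (vupd a l (- int m)) (Xs m)"
      "conv_prob M Xs X"
    by auto
  define Y where "Y \<omega> = of_bool (\<forall>k. k \<notin> set (l # ls) \<longrightarrow> a $ k \<le> j $ k) *\<^sub>R V \<omega>" for \<omega>
  have Y_meas: "Y \<in> borel_measurable M" unfolding Y_def by measurable
  have "\<forall>\<^sub>F m in sequentially. - int m \<le> j $ l"
    by (rule eventually_sequentiallyI[of "nat (- j $ l)"]) auto
  then have "\<forall>\<^sub>F m in sequentially. AE \<omega> in M. Xs m \<omega> = Y \<omega>"
  proof eventually_elim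
    case (elim m)
    then have "(\<forall>k. k \<notin> set ls \<longrightarrow> vupd a l (- int m) $ k \<le> j $ k)
        \<longleftrightarrow> (\<forall>k. k \<notin> set (l # ls) \<longrightarrow> a $ k \<le> j $ k)"
      by (auto simp: vupd_nth)
    then show ?case using Cons.hyps[OF Xs(1)[of m]] by (simp add: Y_def)
  qed
  then have "conv_prob M Xs Y"
    using conv_prob_measurable[OF Xs(2)] Y_meas by (intro conv_prob_cong_AE[OF conv_prob_const[OF Y_meas]]) auto
  from conv_prob_unique_AE[OF Xs(2) this] show ?case by (simp add: Y_def)
qed simp

end

section \<open>The transformation \<open>M_op\<close>\<close>

lemma borel_measurable_matrix_vector_mult:
  "f \<in> borel_measurable M \<Longrightarrow> (\<lambda>\<omega>. (C :: real^'n^'m) *v f \<omega>) \<in> borel_measurable M"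
  by (rule measurable_compose[OF _ borel_measurable_continuous_onI[OF matrix_vector_mult_linear_continuous_on]])

lemma matrix_vector_mult_sum: "(C :: real^'n^'m) *v (\<Sum>i\<in>I. f i) = (\<Sum>i\<in>I. C *v f i)"
  by (induct I rule: infinite_finite_induct) (simp_all add: matrix_vector_right_distrib)

lemma delta_measurable: "(\<And>t. Z t \<in> borel_measurable M) \<Longrightarrow> delta Z t \<in> borel_measurable M"
  unfolding delta_def by (intro borel_measurable_sum borel_measurable_scaleR borel_measurable_const)

lemma matrix_vector_mult_delta:
  "(C :: real^'n^'n) *v delta Y t \<omega> = (\<Sum>S\<in>Pow UNIV. (-1) ^ card S *\<^sub>R (C *v Y (t - ind_vec S) \<omega>))"
  unfolding delta_def matrix_vector_mult_sum by (simp add: matrix_vector_mult_scaleR)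

lemma M_op_measurable: "(\<And>t. Y t \<in> borel_measurable M) \<Longrightarrow> M_op \<Theta> Y t \<in> borel_measurable M"
  unfolding M_op_def
  by (intro borel_measurable_sum borel_measurable_scaleR borel_measurable_const
      borel_measurable_matrix_vector_mult delta_measurable)

lemma delta_M_op: "delta (M_op \<Theta> Y) t \<omega> = mat_exp (- tstar t \<Theta>) *v delta Y t \<omega>"
  unfolding delta_def[of "M_op \<Theta> Y"] M_op_def
  by (rule delta_signed_sum_M_range)

lemma M_op_eq_0:
  assumes "t $ l = 0"
  shows "M_op \<Theta> Y t \<omega> = 0"
proof -
  have "M_range t = {}"
  proof (rule equals0I)
    fix j assume "j \<in> M_range t"
    then have "1 \<le> j $ l" "j $ l \<le> t $ l" using assms by (auto simp: M_range_def)
    with assms show False by simp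
  qed
  then show ?thesis by (simp add: M_op_def)
qed

lemma box_sum_M_op:
  "box_sum \<Theta> (M_op \<Theta> Y) t a \<omega>
    = of_bool (\<forall>l. a $ l \<le> t $ l + 1) *\<^sub>R (\<Sum>S\<in>Pow UNIV. (-1) ^ card S *\<^sub>R Y (box_corner a t S) \<omega>)"
proof -
  have telescope: "box_sum \<Theta> (M_op \<Theta> Y) t a \<omega> = (\<Sum>j\<in>int_box a t. delta Y j \<omega>)"
    unfolding box_sum_eq_sum_int_box delta_M_op mat_exp_cancel_minus ..
  show ?thesis
  proof (cases "\<forall>l. a $ l \<le> t $ l + 1")
    case True
    then show ?thesis by (simp add: telescope sum_delta_int_box)
  next
    case False
    then obtain l where "t $ l + 1 < a $ l" by (auto simp: not_le)
    with False show ?thesis by (simp add: telescope int_box_eq_empty)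
  qed
qed

lemma tstar_vupd_0: "tstar (vupd 0 l c) \<Theta> = of_int c *\<^sub>R \<Theta> l"
proof -
  have "tstar (vupd 0 l c) \<Theta> = (\<Sum>k\<in>UNIV. if k = l then of_int c *\<^sub>R \<Theta> l else 0)"
    unfolding tstar_def by (intro sum.cong refl) (auto simp: vupd_nth)
  then show ?thesis by simp
qed

lemma self_similar_measurable: "self_similar M \<Theta> Y \<Longrightarrow> Y t \<in> borel_measurable M"
  by (simp add: self_similar_def random_field_def)

context prob_space
begin

text \<open>By self-similarity, \<open>Y\<close> at \<open>p - (m + 1) e\<^sub>l\<close> has the law of \<open>e^(-(m + 1) \<Theta>\<^sub>l)\<close> applied to
  \<open>Y p\<close>, and \<open>e^(-\<Theta>\<^sub>l)\<close> is a strict contraction.\<close>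

lemma self_similar_conv_prob_0:
  assumes ss: "self_similar M \<Theta> Y" and pd: "pos_def_mat (\<Theta> l)"
  shows "conv_prob M (\<lambda>m. Y (vupd p l (- int m - 1))) (\<lambda>\<omega>. 0)"
proof -
  have [measurable]: "\<And>t. Y t \<in> borel_measurable M" using ss by (rule self_similar_measurable)
  obtain q where q: "0 \<le> q" "q < 1"
    "\<And>(m::nat) x. norm (mat_exp (- (real m *\<^sub>R \<Theta> l)) *v x) \<le> q ^ m * norm x"
    using mat_exp_pos_def_decay[OF pd] by blast
  define p0 where "p0 = vupd p l 0"
  define s where "s m = vupd 0 l (- int m - 1)" for m :: nat
  have p0_s: "vupd p l (- int m - 1) = p0 + s m" for m
    by (auto simp: vec_eq_iff vupd_nth p0_def s_def)
  have tstar_s: "tstar (s m) \<Theta> = - (real (Suc m) *\<^sub>R \<Theta> l)" for m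
    unfolding s_def tstar_vupd_0 by (simp add: algebra_simps)
  show ?thesis
  proof (rule conv_prob_zero_if_dominated[where c="\<lambda>m. q ^ Suc m" and Z="Y p0"])
    show "(\<lambda>m. q ^ Suc m) \<longlonglongrightarrow> 0"
      using LIMSEQ_Suc[OF LIMSEQ_power_zero[of q]] q by simp
    fix m :: nat and e :: real
    have law: "eq_law M (\<lambda>t. Y (t + s m)) (\<lambda>t \<omega>. mat_exp (tstar (s m) \<Theta>) *v Y t \<omega>)"
      using ss by (simp add: self_similar_def)
    have "emeasure M {\<omega>\<in>space M. Y (p0 + s m) \<omega> \<in> {v. e < norm v}}
        = emeasure M {\<omega>\<in>space M. mat_exp (tstar (s m) \<Theta>) *v Y p0 \<omega> \<in> {v. e < norm v}}"
      by (rule eq_law_emeasure[OF _ _ law, where t=p0]) (auto intro: borel_measurable_matrix_vector_mult)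
    then have "prob {\<omega>\<in>space M. e < norm (Y (vupd p l (- int m - 1)) \<omega>)}
        = prob {\<omega>\<in>space M. e < norm (mat_exp (tstar (s m) \<Theta>) *v Y p0 \<omega>)}"
      by (simp add: measure_def p0_s)
    also have "\<dots> \<le> prob {\<omega>\<in>space M. e < q ^ Suc m * norm (Y p0 \<omega>)}"
      using q(3)[of "Suc m"]
      by (intro finite_measure_mono) (auto simp: tstar_s intro: less_le_trans)
    finally show "prob {\<omega>\<in>space M. e < norm (Y (vupd p l (- int m - 1)) \<omega>)}
        \<le> prob {\<omega>\<in>space M. e < q ^ Suc m * norm (Y p0 \<omega>)}" .
  qed (use q in auto)
qed

end

text \<open>The partial series of \<open>M_op \<Theta> Y\<close> over \<open>[a, t]\<close> once the lower bounds in the directions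
  \<open>L\<close> have been sent to \<open>-\<infinity>\<close>: the corners below the box in a direction of \<open>L\<close> have vanished.\<close>

definition corner_sum :: "((int, 'N::finite) vec \<Rightarrow> 'w \<Rightarrow> real^'n) \<Rightarrow> (int, 'N) vec \<Rightarrow> 'N set
    \<Rightarrow> (int, 'N) vec \<Rightarrow> 'w \<Rightarrow> real^'n" where
  "corner_sum Y t L a \<omega> = of_bool (\<forall>k. k \<notin> L \<longrightarrow> a $ k \<le> t $ k + 1) *\<^sub>R
     (\<Sum>S\<in>Pow (UNIV - L). (-1) ^ card S *\<^sub>R Y (box_corner a t S) \<omega>)"

lemma corner_sum_vupd:
  assumes "l \<notin> L" "- int m \<le> t $ l + 1"
  shows "corner_sum Y t L (vupd a l (- int m)) \<omega>
    = corner_sum Y t (insert l L) a \<omega>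
      + of_bool (\<forall>k. k \<notin> insert l L \<longrightarrow> a $ k \<le> t $ k + 1) *\<^sub>R
        (\<Sum>S\<in>{S \<in> Pow (UNIV - L). l \<in> S}. (-1) ^ card S *\<^sub>R Y (vupd (box_corner a t S) l (- int m - 1)) \<omega>)"
proof -
  define SS where "SS = {S \<in> Pow (UNIV - L). l \<in> S}"
  have "(\<forall>k. k \<notin> L \<longrightarrow> vupd a l (- int m) $ k \<le> t $ k + 1) \<longleftrightarrow> (\<forall>k. k \<notin> insert l L \<longrightarrow> a $ k \<le> t $ k + 1)"
    using assms by (auto simp: vupd_nth)
  moreover have "Pow (UNIV - L) = Pow (UNIV - insert l L) \<union> SS" "Pow (UNIV - insert l L) \<inter> SS = {}"
    by (auto simp: SS_def)
  moreover have "box_corner (vupd a l (- int m)) t S = box_corner a t S" if "S \<in> Pow (UNIV - insert l L)" for S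
    using that by (auto simp: vec_eq_iff box_corner_def vupd_nth)
  moreover have "box_corner (vupd a l (- int m)) t S = vupd (box_corner a t S) l (- int m - 1)" if "S \<in> SS" for S
    using that by (auto simp: vec_eq_iff box_corner_def vupd_nth SS_def)
  ultimately show ?thesis
    unfolding corner_sum_def SS_def[symmetric]
    by (simp add: sum.union_disjoint scaleR_add_right)
qed

context prob_space
begin

lemma iter_lim_box_sum_M_op:
  fixes Y :: "(int, 'N::{finite,linorder}) vec \<Rightarrow> 'a \<Rightarrow> real^'n"
  assumes ss: "self_similar M \<Theta> Y" and pd: "\<forall>l. pos_def_mat (\<Theta> l)"
  shows "distinct ls \<Longrightarrow> iter_lim M ls (box_sum \<Theta> (M_op \<Theta> Y) t) a (corner_sum Y t (set ls) a)"
proof (induct ls arbitrary: a)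
  case Nil
  show ?case by (simp add: fun_eq_iff box_sum_M_op corner_sum_def)
next
  case (Cons l ls)
  have [measurable]: "\<And>t. Y t \<in> borel_measurable M" using ss by (rule self_similar_measurable)
  define c where "c = (\<forall>k. k \<notin> insert l (set ls) \<longrightarrow> a $ k \<le> t $ k + 1)"
  define R where "R m \<omega> = (\<Sum>S\<in>{S \<in> Pow (UNIV - set ls). l \<in> S}.
      (-1) ^ card S *\<^sub>R Y (vupd (box_corner a t S) l (- int m - 1)) \<omega>)" for m \<omega>
  have corner_sum_meas: "corner_sum Y t L b \<in> borel_measurable M" for L b
    unfolding corner_sum_def[abs_def] by measurable
  have "conv_prob M R (\<lambda>\<omega>. \<Sum>S\<in>{S \<in> Pow (UNIV - set ls). l \<in> S}. (-1) ^ card S *\<^sub>R 0)"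
    unfolding R_def[abs_def]
    by (intro conv_prob_sum conv_prob_bounded_linear[OF bounded_linear_scaleR_right]
        self_similar_conv_prob_0[OF ss pd[rule_format]]) simp
  then have "conv_prob M (\<lambda>m \<omega>. corner_sum Y t (insert l (set ls)) a \<omega> + of_bool c *\<^sub>R R m \<omega>)
      (\<lambda>\<omega>. corner_sum Y t (insert l (set ls)) a \<omega> + of_bool c *\<^sub>R 0)"
    by (intro conv_prob_add conv_prob_const corner_sum_meas conv_prob_bounded_linear[OF bounded_linear_scaleR_right])
      simp
  then have "conv_prob M (\<lambda>m. corner_sum Y t (set ls) (vupd a l (- int m))) (corner_sum Y t (set (l # ls)) a)"
  proof (rule conv_prob_cong_AE)
    have "\<forall>\<^sub>F m in sequentially. - int m \<le> t $ l + 1"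
      by (rule eventually_sequentiallyI[of "nat (- t $ l)"]) auto
    then show "\<forall>\<^sub>F m in sequentially. AE \<omega> in M. corner_sum Y t (set ls) (vupd a l (- int m)) \<omega>
        = corner_sum Y t (insert l (set ls)) a \<omega> + of_bool c *\<^sub>R R m \<omega>"
      by eventually_elim (use Cons.prems in \<open>simp add: corner_sum_vupd c_def R_def\<close>)
  qed (simp_all add: corner_sum_meas)
  then show ?case
    using Cons.prems by (auto intro!: exI Cons.hyps)
qed

lemma series_lim_M_op:
  assumes "self_similar M \<Theta> Y" and "\<forall>l. pos_def_mat (\<Theta> l)"
  shows "series_lim M \<Theta> (M_op \<Theta> Y) t (Y t)"
proof -
  have "iter_lim M coords (box_sum \<Theta> (M_op \<Theta> Y) t) 0 (corner_sum Y t (set coords) 0)"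
    by (rule iter_lim_box_sum_M_op[OF assms distinct_coords])
  moreover have "corner_sum Y t (set coords) 0 = Y t"
    by (simp add: fun_eq_iff corner_sum_def set_coords box_corner_def)
  ultimately show ?thesis by (simp add: series_lim_def)
qed

lemma M_op_stationary_increments:
  fixes Y :: "(int, 'N::finite) vec \<Rightarrow> 'a \<Rightarrow> real^'n"
  assumes comm: "\<forall>i j. \<Theta> i ** \<Theta> j = \<Theta> j ** \<Theta> i" and ss: "self_similar M \<Theta> Y"
  shows "stationary_increments M (M_op \<Theta> Y)"
  unfolding stationary_increments_def
proof (intro conjI allI)
  have Y: "\<And>t. Y t \<in> borel_measurable M" using ss by (rule self_similar_measurable)
  then show "random_field M (M_op \<Theta> Y)" unfolding random_field_def by (intro allI M_op_measurable)
  fix s :: "(int, 'N) vec"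
  have law: "eq_law M (\<lambda>t. Y (t + s)) (\<lambda>t \<omega>. mat_exp (tstar s \<Theta>) *v Y t \<omega>)"
    using ss by (simp add: self_similar_def)
  have shift: "mat_exp (- tstar (u + s) \<Theta>) *v (mat_exp (tstar s \<Theta>) *v v) = mat_exp (- tstar u \<Theta>) *v v"
    for u v
  proof -
    have "- tstar (u + s) \<Theta> = tstar (- u + - s) \<Theta>"
      by (simp only: tstar_add tstar_minus minus_add_distrib)
    then have "mat_exp (- tstar (u + s) \<Theta>) = mat_exp (- tstar u \<Theta>) ** mat_exp (- tstar s \<Theta>)"
      using mat_exp_tstar_add[OF comm, of "- u" "- s"] by (simp only: tstar_minus)
    then show ?thesis by (simp add: matrix_vector_mul_assoc[symmetric] mat_exp_minus_cancel)
  qed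
  define K where "K u = (\<lambda>S. u - ind_vec S) ` Pow (UNIV::'N set)" for u
  define h where "h u z = mat_exp (- tstar (u + s) \<Theta>) *v (\<Sum>S\<in>Pow UNIV. (-1) ^ card S *\<^sub>R z (u - ind_vec S))"
    for u and z :: "(int, 'N) vec \<Rightarrow> real^'n"
  show "eq_law M (\<lambda>t. delta (M_op \<Theta> Y) (t + s)) (\<lambda>t. delta (M_op \<Theta> Y) t)"
  proof (rule eq_law_compose[OF _ _ law, where K=K and h=h])
    show "Y (i + s) \<in> borel_measurable M" "(\<lambda>\<omega>. mat_exp (tstar s \<Theta>) *v Y i \<omega>) \<in> borel_measurable M" for i
      by (simp_all add: Y borel_measurable_matrix_vector_mult)
    show "finite (K u)" for u by (simp add: K_def)
    show "h u \<in> borel_measurable (PiM (K u) (\<lambda>_. borel))" for u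
      unfolding h_def
      by (intro borel_measurable_matrix_vector_mult borel_measurable_sum borel_measurable_scaleR
          borel_measurable_const measurable_component_singleton) (auto simp: K_def)
    show "delta (M_op \<Theta> Y) (u + s) \<omega> = h u (restrict (\<lambda>i. Y (i + s) \<omega>) (K u))" for u \<omega>
    proof -
      have "(\<Sum>S\<in>Pow UNIV. (-1) ^ card S *\<^sub>R restrict (\<lambda>i. Y (i + s) \<omega>) (K u) (u - ind_vec S))
          = (\<Sum>S\<in>Pow UNIV. (-1) ^ card S *\<^sub>R Y (u + s - ind_vec S) \<omega>)"
        by (intro sum.cong refl) (auto simp: K_def algebra_simps)
      then show ?thesis by (simp add: h_def delta_M_op delta_def[of Y])
    qed
    show "delta (M_op \<Theta> Y) u \<omega> = h u (restrict (\<lambda>i. mat_exp (tstar s \<Theta>) *v Y i \<omega>) (K u))" for u \<omega>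
    proof -
      have "(\<Sum>S\<in>Pow UNIV. (-1) ^ card S *\<^sub>R restrict (\<lambda>i. mat_exp (tstar s \<Theta>) *v Y i \<omega>) (K u) (u - ind_vec S))
          = (\<Sum>S\<in>Pow UNIV. (-1) ^ card S *\<^sub>R (mat_exp (tstar s \<Theta>) *v Y (u - ind_vec S) \<omega>))"
        by (intro sum.cong refl) (auto simp: K_def)
      then show ?thesis
        unfolding h_def by (simp only: matrix_vector_mult_delta[symmetric] shift delta_M_op)
    qed
  qed
qed

end

section \<open>The transformation \<open>Minv\<close>\<close>

lemma M_range_eq_int_box:
  "M_range t = int_box (\<chi> l. if 0 \<le> t $ l then 1 else t $ l + 1) (\<chi> l. if 0 \<le> t $ l then t $ l else 0)"
proof -
  have "((0 \<le> t $ l \<longrightarrow> 1 \<le> j $ l \<and> j $ l \<le> t $ l) \<and> (t $ l < 0 \<longrightarrow> t $ l + 1 \<le> j $ l \<and> j $ l \<le> 0))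
      \<longleftrightarrow> (\<chi> l. if 0 \<le> t $ l then 1 else t $ l + 1) $ l \<le> j $ l
          \<and> j $ l \<le> (\<chi> l. if 0 \<le> t $ l then t $ l else 0) $ l" for j l
    by (cases "0 \<le> t $ l") simp_all
  then show ?thesis by (simp only: M_range_def int_box_def)
qed

text \<open>The sum of the increments over \<open>M_range t\<close> telescopes to the signed value at \<open>t\<close>; all
  other corners of the box lie on a coordinate hyperplane.\<close>

lemma sum_delta_M_range:
  fixes Z :: "(int, 'N::finite) vec \<Rightarrow> 'w \<Rightarrow> real^'n"
  assumes axes: "\<And>u. u \<in> int_box (\<chi> l. - \<bar>t $ l\<bar>) (\<chi> l. \<bar>t $ l\<bar>) \<Longrightarrow> \<exists>l. u $ l = 0 \<Longrightarrow> Z u \<omega> = 0"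
  shows "(\<Sum>j\<in>M_range t. delta Z j \<omega>) = (-1) ^ card {l. t $ l < 0} *\<^sub>R Z t \<omega>"
proof -
  define lo where "lo = (\<chi> l. if 0 \<le> t $ l then 1 else t $ l + 1)"
  define hi where "hi = (\<chi> l. if 0 \<le> t $ l then t $ l else 0)"
  define N where "N = {l. t $ l < 0}"
  have ordered: "\<forall>l. lo $ l \<le> hi $ l + 1" by (simp add: lo_def hi_def)
  have "(\<Sum>j\<in>M_range t. delta Z j \<omega>) = (\<Sum>S\<in>Pow UNIV. (-1) ^ card S *\<^sub>R Z (box_corner lo hi S) \<omega>)"
    unfolding M_range_eq_int_box lo_def[symmetric] hi_def[symmetric] by (rule sum_delta_int_box[OF ordered])
  also have "\<dots> = (-1) ^ card N *\<^sub>R Z (box_corner lo hi N) \<omega>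
      + (\<Sum>S\<in>Pow UNIV - {N}. (-1) ^ card S *\<^sub>R Z (box_corner lo hi S) \<omega>)"
    by (rule sum.remove) simp_all
  also have "(\<Sum>S\<in>Pow UNIV - {N}. (-1) ^ card S *\<^sub>R Z (box_corner lo hi S) \<omega>) = 0"
  proof (intro sum.neutral ballI)
    fix S assume "S \<in> Pow UNIV - {N}"
    then obtain l where "(l \<in> S) \<noteq> (t $ l < 0)" by (auto simp: N_def)
    then have "box_corner lo hi S $ l = 0"
      by (cases "l \<in> S") (auto simp: box_corner_def lo_def hi_def)
    moreover have "box_corner lo hi S \<in> int_box (\<chi> l. - \<bar>t $ l\<bar>) (\<chi> l. \<bar>t $ l\<bar>)"
      by (rule in_int_boxI) (simp add: box_corner_def lo_def hi_def abs_if)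
    ultimately show "(-1) ^ card S *\<^sub>R Z (box_corner lo hi S) \<omega> = 0" using axes by auto
  qed
  also have "box_corner lo hi N = t" by (simp add: vec_eq_iff box_corner_def lo_def hi_def N_def)
  finally show ?thesis by (simp add: N_def)
qed

context prob_space
begin

lemma iter_lim_Minv:
  assumes "G_class M \<Theta> G"
  shows "iter_lim M coords (box_sum \<Theta> G t) 0 (Minv M \<Theta> G t)"
proof -
  have "\<exists>X. series_lim M \<Theta> G t X" using assms by (simp add: G_class_def)
  then have "series_lim M \<Theta> G t (Minv M \<Theta> G t)" unfolding Minv_def by (rule someI_ex)
  then show ?thesis by (simp add: series_lim_def)
qed

lemma Minv_measurable: "G_class M \<Theta> G \<Longrightarrow> Minv M \<Theta> G t \<in> borel_measurable M"
  by (rule iter_lim_measurable[OF iter_lim_Minv coords_not_Nil])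

lemma Minv_M_op_AE:
  assumes "self_similar M \<Theta> Y" "\<forall>l. pos_def_mat (\<Theta> l)"
  shows "AE \<omega> in M. Minv M \<Theta> (M_op \<Theta> Y) t \<omega> = Y t \<omega>"
proof -
  have "series_lim M \<Theta> (M_op \<Theta> Y) t (Y t)" by (rule series_lim_M_op[OF assms])
  moreover from this have "series_lim M \<Theta> (M_op \<Theta> Y) t (Minv M \<Theta> (M_op \<Theta> Y) t)"
    unfolding Minv_def by (rule someI[where P="series_lim M \<Theta> (M_op \<Theta> Y) t"])
  ultimately show ?thesis
    unfolding series_lim_def by (intro iter_lim_unique_AE)
qed

lemma eq_law_box_sum_translate:
  assumes comm: "\<forall>i j. \<Theta> i ** \<Theta> j = \<Theta> j ** \<Theta> i" and si: "stationary_increments M G"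
  shows "eq_law M (\<lambda>t. box_sum \<Theta> G (t + s) (a + s)) (\<lambda>t \<omega>. mat_exp (tstar s \<Theta>) *v box_sum \<Theta> G t a \<omega>)"
proof -
  have G: "G t \<in> borel_measurable M" for t
    using si by (simp add: stationary_increments_def random_field_def)
  have law: "eq_law M (\<lambda>t. delta G (t + s)) (\<lambda>t. delta G t)"
    using si by (simp add: stationary_increments_def)
  show ?thesis
  proof (rule eq_law_compose[OF _ _ law, where K="int_box a"
        and h="\<lambda>t z. \<Sum>j\<in>int_box a t. mat_exp (tstar (j + s) \<Theta>) *v z j"])
    show "delta G (i + s) \<in> borel_measurable M" "delta G i \<in> borel_measurable M" for i
      by (simp_all add: delta_measurable G)
    show "finite (int_box a t)" for t by (rule finite_int_box)
    show "(\<lambda>z. \<Sum>j\<in>int_box a t. mat_exp (tstar (j + s) \<Theta>) *v z j)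
        \<in> borel_measurable (PiM (int_box a t) (\<lambda>_. borel))" for t
      by (intro borel_measurable_sum borel_measurable_matrix_vector_mult measurable_component_singleton) auto
    show "box_sum \<Theta> G (t + s) (a + s) \<omega>
        = (\<Sum>j\<in>int_box a t. mat_exp (tstar (j + s) \<Theta>) *v restrict (\<lambda>i. delta G (i + s) \<omega>) (int_box a t) j)"
      for t \<omega>
      by (simp add: box_sum_eq_sum_int_box int_box_translate sum.reindex inj_on_def)
    show "mat_exp (tstar s \<Theta>) *v box_sum \<Theta> G t a \<omega>
        = (\<Sum>j\<in>int_box a t. mat_exp (tstar (j + s) \<Theta>) *v restrict (\<lambda>i. delta G i \<omega>) (int_box a t) j)"
      for t \<omega>
      by (simp add: box_sum_eq_sum_int_box matrix_vector_mult_sum matrix_vector_mul_assoc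
          mat_exp_tstar_add[OF comm, of s] add.commute[of _ s])
  qed
qed

lemma Minv_translate_nonpos:
  fixes G :: "(int, 'N::{finite,linorder}) vec \<Rightarrow> 'a \<Rightarrow> real^'n"
  assumes comm: "\<forall>i j. \<Theta> i ** \<Theta> j = \<Theta> j ** \<Theta> i" and G: "G_class M \<Theta> G"
    and s: "\<forall>l. s $ l \<le> 0"
  shows "eq_law M (\<lambda>t. Minv M \<Theta> G (t + s)) (\<lambda>t \<omega>. mat_exp (tstar s \<Theta>) *v Minv M \<Theta> G t \<omega>)"
  unfolding eq_law_def
proof (intro allI impI)
  fix T :: "(int, 'N) vec set" assume T: "finite T"
  have si: "stationary_increments M G" using G by (simp add: G_class_def)
  show "distr M (PiM T (\<lambda>_. borel)) (\<lambda>\<omega>. restrict (\<lambda>t. Minv M \<Theta> G (t + s) \<omega>) T)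
      = distr M (PiM T (\<lambda>_. borel)) (\<lambda>\<omega>. restrict (\<lambda>t. mat_exp (tstar s \<Theta>) *v Minv M \<Theta> G t \<omega>) T)"
  proof (rule iter_lim_distr_eq[OF T, where ls=coords and a=0])
    show "distr M (PiM T (\<lambda>_. borel)) (\<lambda>\<omega>. restrict (\<lambda>t. box_sum \<Theta> G (t + s) (a + s) \<omega>) T)
        = distr M (PiM T (\<lambda>_. borel)) (\<lambda>\<omega>. restrict (\<lambda>t. mat_exp (tstar s \<Theta>) *v box_sum \<Theta> G t a \<omega>) T)"
      for a
      using eq_law_box_sum_translate[OF comm si, of s a] T unfolding eq_law_def by blast
    show "\<forall>t\<in>T. iter_lim M coords (\<lambda>a. box_sum \<Theta> G (t + s) (a + s)) 0 (Minv M \<Theta> G (t + s))"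
    proof
      fix t
      have "iter_lim M coords (box_sum \<Theta> G (t + s)) (0 + s) (Minv M \<Theta> G (t + s))"
        by (rule iter_lim_base_cong[OF iter_lim_Minv[OF G]]) (simp add: set_coords)
      with s show "iter_lim M coords (\<lambda>a. box_sum \<Theta> G (t + s) (a + s)) 0 (Minv M \<Theta> G (t + s))"
        by (intro iter_lim_translate) simp_all
    qed
    show "\<forall>t\<in>T. iter_lim M coords (\<lambda>a \<omega>. mat_exp (tstar s \<Theta>) *v box_sum \<Theta> G t a \<omega>) 0
        (\<lambda>\<omega>. mat_exp (tstar s \<Theta>) *v Minv M \<Theta> G t \<omega>)"
      using iter_lim_bounded_linear[OF matrix_vector_mul_bounded_linear iter_lim_Minv[OF G]] by blast
  qed
qed

end

text \<open>It suffices to check self-similarity for shifts \<open>s \<le> 0\<close>: a shift \<open>s \<ge> 0\<close> is inverted by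
  \<open>-s\<close>, and every shift is the sum of a nonpositive and a nonnegative one.\<close>

lemma self_similar_if_translate_nonpos:
  assumes comm: "\<forall>i j. \<Theta> i ** \<Theta> j = \<Theta> j ** \<Theta> i"
    and W: "\<And>t. W t \<in> borel_measurable M"
    and nonpos: "\<And>s. \<forall>l. s $ l \<le> 0 \<Longrightarrow>
      eq_law M (\<lambda>t. W (t + s)) (\<lambda>t \<omega>. mat_exp (tstar s \<Theta>) *v W t \<omega>)"
  shows "self_similar M \<Theta> W"
proof -
  define E where "E s = mat_exp (tstar s \<Theta>)" for s
  have EW: "(\<lambda>\<omega>. E s *v W t \<omega>) \<in> borel_measurable M" for s t
    by (intro borel_measurable_matrix_vector_mult W)
  have E_apply: "(\<lambda>v. E s *v v) \<in> borel_measurable borel" for s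
    by (intro borel_measurable_continuous_onI matrix_vector_mult_linear_continuous_on)
  have nonneg: "eq_law M (\<lambda>t. W (t + s)) (\<lambda>t \<omega>. E s *v W t \<omega>)" if "\<forall>l. 0 \<le> s $ l" for s
  proof -
    have opposite: "eq_law M (\<lambda>t. W (t + - s)) (\<lambda>t \<omega>. E (- s) *v W t \<omega>)"
      using that nonpos[of "- s"] by (simp add: E_def)
    have "eq_law M (\<lambda>u \<omega>. E s *v W u \<omega>) (\<lambda>u \<omega>. E s *v (E (- s) *v W (u + s) \<omega>))"
      using eq_law_compose_pointwise[OF _ _ opposite, where g="\<lambda>u. u + s" and f="\<lambda>u v. E s *v v"] W EW E_apply
      by simp
    then have "eq_law M (\<lambda>u \<omega>. E s *v W u \<omega>) (\<lambda>u. W (u + s))"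
      by (simp add: E_def tstar_minus mat_exp_cancel_minus)
    then show ?thesis by (rule eq_law_sym)
  qed
  have "eq_law M (\<lambda>t. W (t + s)) (\<lambda>t \<omega>. E s *v W t \<omega>)" for s
  proof -
    define p :: "(int, _) vec" where "p = (\<chi> l. max (s $ l) 0)"
    define q :: "(int, _) vec" where "q = (\<chi> l. min (s $ l) 0)"
    have "\<forall>l. q $ l \<le> 0" "\<forall>l. 0 \<le> p $ l" by (simp_all add: p_def q_def)
    note shift_q = nonpos[OF this(1), folded E_def] and shift_p = nonneg[OF this(2)]
    have first: "eq_law M (\<lambda>u. W (u + p + q)) (\<lambda>u \<omega>. E q *v W (u + p) \<omega>)"
      by (rule eq_law_compose_pointwise[OF _ _ shift_q, where g="\<lambda>u. u + p" and f="\<lambda>u v. v"])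
        (auto simp: W EW intro: measurable_ident_sets)
    have second: "eq_law M (\<lambda>u \<omega>. E q *v W (u + p) \<omega>) (\<lambda>u \<omega>. E q *v (E p *v W u \<omega>))"
      by (rule eq_law_compose_pointwise[OF _ _ shift_p, where g="\<lambda>u. u" and f="\<lambda>u v. E q *v v"])
        (simp_all add: W EW E_apply)
    have "s = p + q" by (auto simp: vec_eq_iff p_def q_def)
    moreover have "E q *v (E p *v v) = E (p + q) *v v" for v
      using mat_exp_tstar_add[OF comm, of q p] by (simp add: E_def matrix_vector_mul_assoc add.commute)
    ultimately show ?thesis
      using eq_law_trans[OF first second] by (simp add: add.assoc)
  qed
  then show ?thesis
    unfolding self_similar_def random_field_def using W by (simp add: E_def)
qed

context prob_space
begin

lemma Minv_self_similar:
  assumes comm: "\<forall>i j. \<Theta> i ** \<Theta> j = \<Theta> j ** \<Theta> i" and G: "G_class M \<Theta> G"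
  shows "self_similar M \<Theta> (Minv M \<Theta> G)"
  by (intro self_similar_if_translate_nonpos[OF comm] Minv_measurable[OF G] Minv_translate_nonpos[OF comm G])

lemma delta_Minv_AE:
  assumes G: "G_class M \<Theta> G"
  shows "AE \<omega> in M. delta (Minv M \<Theta> G) j \<omega> = mat_exp (tstar j \<Theta>) *v delta G j \<omega>"
proof -
  define V where "V \<omega> = mat_exp (tstar j \<Theta>) *v delta G j \<omega>" for \<omega>
  have "G t \<in> borel_measurable M" for t
    using G by (simp add: G_class_def stationary_increments_def random_field_def)
  then have V: "V \<in> borel_measurable M"
    unfolding V_def by (intro borel_measurable_matrix_vector_mult delta_measurable)
  have "iter_lim M coords (\<lambda>a \<omega>. \<Sum>S\<in>Pow UNIV. (-1) ^ card S *\<^sub>R box_sum \<Theta> G (j - ind_vec S) a \<omega>) 0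
      (\<lambda>\<omega>. \<Sum>S\<in>Pow UNIV. (-1) ^ card S *\<^sub>R Minv M \<Theta> G (j - ind_vec S) \<omega>)"
    by (intro iter_lim_sum ballI iter_lim_bounded_linear[OF bounded_linear_scaleR_right] iter_lim_Minv[OF G])
      simp
  moreover have "(\<Sum>S\<in>Pow UNIV. (-1) ^ card S *\<^sub>R box_sum \<Theta> G (j - ind_vec S) a \<omega>)
      = of_bool (\<forall>l. a $ l \<le> j $ l) *\<^sub>R V \<omega>" for a \<omega>
    unfolding box_sum_eq_sum_int_box V_def by (rule delta_sum_int_box)
  ultimately have "iter_lim M coords (\<lambda>a \<omega>. of_bool (\<forall>l. a $ l \<le> j $ l) *\<^sub>R V \<omega>) 0 (delta (Minv M \<Theta> G) j)"
    by (simp add: delta_def[abs_def])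
  from iter_lim_indicator_AE[OF V this] show ?thesis by (simp add: set_coords V_def)
qed

lemma M_op_Minv_AE:
  fixes G :: "(int, 'N::{finite,linorder}) vec \<Rightarrow> 'a \<Rightarrow> real^'n"
  assumes G0: "G_class0 M \<Theta> G"
  shows "AE \<omega> in M. M_op \<Theta> (Minv M \<Theta> G) t \<omega> = G t \<omega>"
proof -
  have G: "G_class M \<Theta> G" using G0 by (simp add: G_class0_def)
  have "finite (M_range t)"
    by (simp add: M_range_eq_int_box finite_int_box)
  then have "AE \<omega> in M. \<forall>j\<in>M_range t. delta (Minv M \<Theta> G) j \<omega> = mat_exp (tstar j \<Theta>) *v delta G j \<omega>"
    by (rule AE_finite_allI) (rule delta_Minv_AE[OF G])
  moreover have "AE \<omega> in M. \<forall>u\<in>int_box (\<chi> l. - \<bar>t $ l\<bar>) (\<chi> l. \<bar>t $ l\<bar>). (\<exists>l. u $ l = 0) \<longrightarrow> G u \<omega> = 0"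
    using G0 by (intro AE_finite_allI finite_int_box) (simp add: G_class0_def)
  ultimately show ?thesis
  proof eventually_elim
    case (elim \<omega>)
    have "(\<Sum>j\<in>M_range t. mat_exp (- tstar j \<Theta>) *v delta (Minv M \<Theta> G) j \<omega>)
        = (\<Sum>j\<in>M_range t. delta G j \<omega>)"
      using elim(1) by (simp add: mat_exp_minus_cancel)
    also have "\<dots> = (-1) ^ card {l. t $ l < 0} *\<^sub>R G t \<omega>"
      by (rule sum_delta_M_range) (use elim(2) in blast)
    finally show ?case
      by (simp add: M_op_def flip: power_mult_distrib)
  qed
qed

end

theorem mainTheorem8:
  fixes M :: "'w measure"
    and \<Theta> :: "'N::{finite,linorder} \<Rightarrow> real^'n^'n"
  assumes "prob_space M"
    and "\<forall>i j. \<Theta> i ** \<Theta> j = \<Theta> j ** \<Theta> i"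
    and "\<forall>l. transpose (\<Theta> l) = \<Theta> l"
    and "\<forall>l. pos_def_mat (\<Theta> l)"
  shows "(\<forall>Y. self_similar M \<Theta> Y \<longrightarrow> G_class0 M \<Theta> (M_op \<Theta> Y))
       \<and> (\<forall>G. G_class M \<Theta> G \<longrightarrow> self_similar M \<Theta> (Minv M \<Theta> G))
       \<and> (\<forall>Y. self_similar M \<Theta> Y \<longrightarrow>
             (\<forall>t. AE \<omega> in M. Minv M \<Theta> (M_op \<Theta> Y) t \<omega> = Y t \<omega>))
       \<and> (\<forall>G. G_class0 M \<Theta> G \<longrightarrow>
             (\<forall>t. AE \<omega> in M. M_op \<Theta> (Minv M \<Theta> G) t \<omega> = G t \<omega>))"
proof -
  interpret prob_space M by (rule assms(1))
  have "G_class0 M \<Theta> (M_op \<Theta> Y)" if "self_similar M \<Theta> Y" for Y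
    unfolding G_class0_def G_class_def
    using that series_lim_M_op[OF that assms(4)] M_op_stationary_increments[OF assms(2) that]
    by (auto intro: M_op_eq_0)
  then show ?thesis
    using Minv_self_similar[OF assms(2)] Minv_M_op_AE[OF _ assms(4)] M_op_Minv_AE by blast
qed

end
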